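(* Let $0<\alpha<1$, $F(x)=\sum_{j\ge0}2^{-\alpha j}\mathrm{dist}(2^jx,\mathbb{Z})$ on $[0,1]$, $\Omega=\{(x,y): 0\le x\le1,\ 0\le y\le F(x)\}$, $\Omega^c=\mathbb{R}^2\setminus\Omega$ and $f=\mathbf{1}_\Omega$. Let $x$ be the abscissa of a local maximum of $F$ and $X=(x,F(x))$. Then $E^w_{\Omega}(X)=E^s_{\Omega}(X)=\frac1\alpha-1$, $E^w_{\Omega^c}(X)=E^s_{\Omega^c}(X)=0$, and $u^p_f(X)=\frac1p\left(\frac1\alpha-1\right)$ for every $p\in[1,\infty]$.
   Context: $\mathrm{meas}$ is Lebesgue measure on $\mathbb{R}^2$, $B(X,r)$ the open disc. For $A\in\{\Omega,\Omega^c\}$ and $X_0\in\partial\Omega$: $E^w_A(X_0)$ is the supremum of $\beta$ such that there exist $C,r_0>0$ with $\mathrm{meas}(A\cap B(X_0,r))\le Cr^{\beta+2}$ for all $r\le r_0$; $E^s_A(X_0)$ is the infimum of $\beta$ such that there exist $C,r_0>0$ with $\mathrm{meas}(A\cap B(X_0,r))\ge Cr^{\beta+2}$ for all $r\le r_0$. For $g\in L^p_{loc}(\mathbb{R}^2)$, $g\in T^p_u(X_0)$ ($u\ge-2/p$) if there exist $R,C>0$ and a polynomial $P$ of degree $\le u$ with $\left(\rho^{-2}\int_{|X-X_0|\le\rho}|g-P|^p\right)^{1/p}\le C\rho^u$ for all $\rho\le R$; $u^p_g(X_0)=\sup\{u:g\in T^p_u(X_0)\}$. *)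

theory Defs
  imports "HOL-Analysis.Analysis" "HOL-Probability.Essential_Supremum"
begin

type_synonym pt = "real \<times> real"

definition Fw :: "real \<Rightarrow> real \<Rightarrow> real" where
  "Fw \<alpha> x = (\<Sum>j. 2 powr (- \<alpha> * real j) * infdist (2 ^ j * x) \<int>)"

definition Omega :: "real \<Rightarrow> pt set" where
  "Omega \<alpha> = {(x, y). 0 \<le> x \<and> x \<le> 1 \<and> 0 \<le> y \<and> y \<le> Fw \<alpha> x}"

definition Ew :: "pt set \<Rightarrow> pt \<Rightarrow> ereal" where
  "Ew A X0 = Sup (ereal ` {\<beta>. \<exists>C r0. C > 0 \<and> r0 > 0 \<and>
      (\<forall>r. 0 < r \<and> r \<le> r0 \<longrightarrow> measure lebesgue (A \<inter> ball X0 r) \<le> C * r powr (\<beta> + 2))})"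

definition Es :: "pt set \<Rightarrow> pt \<Rightarrow> ereal" where
  "Es A X0 = Inf (ereal ` {\<beta>. \<exists>C r0. C > 0 \<and> r0 > 0 \<and>
      (\<forall>r. 0 < r \<and> r \<le> r0 \<longrightarrow> measure lebesgue (A \<inter> ball X0 r) \<ge> C * r powr (\<beta> + 2))})"

text \<open>Polynomials in two real variables of total degree at most u (u real;
  for u < 0 only the zero polynomial).\<close>
definition poly2_deg_le :: "real \<Rightarrow> (pt \<Rightarrow> real) \<Rightarrow> bool" where
  "poly2_deg_le u P \<longleftrightarrow> (\<exists>c :: nat \<Rightarrow> nat \<Rightarrow> real.
     P = (\<lambda>(x, y). \<Sum>(i, j) \<in> {(i, j). real (i + j) \<le> u}. c i j * x ^ i * y ^ j))"

definition Lp_loc :: "real \<Rightarrow> (pt \<Rightarrow> real) \<Rightarrow> bool" where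
  "Lp_loc p g \<longleftrightarrow> g \<in> borel_measurable lebesgue \<and>
     (\<forall>K. compact K \<longrightarrow> (\<integral>\<^sup>+ X. ennreal (\<bar>g X\<bar> powr p) * indicator K X \<partial>lebesgue) < \<infinity>)"

definition Linf_loc :: "(pt \<Rightarrow> real) \<Rightarrow> bool" where
  "Linf_loc g \<longleftrightarrow> g \<in> borel_measurable lebesgue \<and>
     (\<forall>K. compact K \<longrightarrow> esssup (restrict_space lebesgue K) (\<lambda>X. ereal \<bar>g X\<bar>) < \<infinity>)"

definition Tp :: "real \<Rightarrow> real \<Rightarrow> (pt \<Rightarrow> real) \<Rightarrow> pt \<Rightarrow> bool" where
  "Tp p u g X0 \<longleftrightarrow> Lp_loc p g \<and> u \<ge> - 2 / p \<and>
     (\<exists>R C P. R > 0 \<and> C > 0 \<and> poly2_deg_le u P \<and>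
        (\<forall>\<rho>. 0 < \<rho> \<and> \<rho> \<le> R \<longrightarrow>
          (let I = \<integral>\<^sup>+ X. ennreal (\<bar>g X - P X\<bar> powr p) * indicator (cball X0 \<rho>) X \<partial>lebesgue
           in I < \<infinity> \<and> (\<rho> powr (-2) * enn2real I) powr (1 / p) \<le> C * \<rho> powr u)))"

definition Tinf :: "real \<Rightarrow> (pt \<Rightarrow> real) \<Rightarrow> pt \<Rightarrow> bool" where
  "Tinf u g X0 \<longleftrightarrow> Linf_loc g \<and> u \<ge> 0 \<and>
     (\<exists>R C P. R > 0 \<and> C > 0 \<and> poly2_deg_le u P \<and>
        (\<forall>\<rho>. 0 < \<rho> \<and> \<rho> \<le> R \<longrightarrow>
          esssup (restrict_space lebesgue (cball X0 \<rho>)) (\<lambda>X. ereal \<bar>g X - P X\<bar>)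
            \<le> ereal (C * \<rho> powr u)))"

definition up_exp :: "real \<Rightarrow> (pt \<Rightarrow> real) \<Rightarrow> pt \<Rightarrow> ereal" where
  "up_exp p g X0 = Sup (ereal ` {u. Tp p u g X0})"

definition uinf_exp :: "(pt \<Rightarrow> real) \<Rightarrow> pt \<Rightarrow> ereal" where
  "uinf_exp g X0 = Sup (ereal ` {u. Tinf u g X0})"

end

theory Submission
  imports Defs
begin

text \<open>With lam = 2 powr -alpha the function satisfies F u = dist(u, Z) + lam F(2u). Hence on a
  dyadic interval of length 2^-n, F is, up to an additive constant, lam^n times a tilted copy
  sigma u + F u rescaled to [0,1], and halving the interval changes the slope by
  sigma |-> mu (sigma + 1) or mu (sigma - 1), where mu = 1 / (2 lam). Along the dyadic intervals
  shrinking to a local maximum x the slope is driven into the range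
  mu (1 - mu) <= |sigma| <= mu, where the tilted copy G peaks at t0 = 1/3 or 2/3 with a two-sided cusp
  c |t - t0|^alpha <= G t0 - G t <= C |t - t0|^alpha; rescaling transfers the cusp to F at x.

  Near such a cusp the region Omega meets the disc of radius r about X = (x, F x) in a spike of
  area of order r^(1/alpha + 1), while its complement fills a fixed proportion of the disc. For the pointwise exponents, the indicator is at
  L^p distance of order r^((1/alpha - 1)/p) from 0, and no polynomial, being continuous, comes
  closer than 1/4 to it on a set of area of order r^(1/alpha + 1).\<close>

section \<open>Distance to the integers\<close>

lemma infdist_Ints_eq:
  fixes x n :: real
  assumes "n \<in> \<int>" "n \<le> x" "x \<le> n + 1"
  shows "infdist x \<int> = min (x - n) (n + 1 - x)"
proof -
  have bdd: "bdd_below (dist x ` \<int>)" by (rule bdd_belowI[of _ 0]) auto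
  have "infdist x \<int> = Inf (dist x ` \<int>)"
    using Ints_0 by (auto simp: infdist_def)
  also have "\<dots> = min (x - n) (n + 1 - x)"
  proof (rule antisym)
    have "Inf (dist x ` \<int>) \<le> dist x n" "Inf (dist x ` \<int>) \<le> dist x (n + 1)"
      using assms(1) bdd by (auto intro!: cINF_lower)
    then show "Inf (dist x ` \<int>) \<le> min (x - n) (n + 1 - x)"
      using assms by (simp add: dist_real_def)
  next
    show "min (x - n) (n + 1 - x) \<le> Inf (dist x ` \<int>)"
    proof (rule cINF_greatest)
      fix z :: real assume "z \<in> \<int>"
      moreover obtain k where "n = of_int k" using assms(1) by (auto elim: Ints_cases)
      ultimately have "z \<le> n \<or> n + 1 \<le> z"
        by (auto elim!: Ints_cases)
      then show "min (x - n) (n + 1 - x) \<le> dist x z"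
        using assms by (auto simp: dist_real_def)
    qed (use Ints_0 in blast)
  qed
  finally show ?thesis .
qed

lemma infdist_Ints_floor: "infdist (x::real) \<int> = min (x - of_int \<lfloor>x\<rfloor>) (of_int \<lfloor>x\<rfloor> + 1 - x)"
  by (rule infdist_Ints_eq) auto

lemma infdist_Ints_unit: "0 \<le> (x::real) \<Longrightarrow> x \<le> 1 \<Longrightarrow> infdist x \<int> = min x (1 - x)"
  using infdist_Ints_eq[of 0 x] by simp

lemma infdist_Ints_add_Ints: "m \<in> \<int> \<Longrightarrow> infdist ((x::real) + m) \<int> = infdist x \<int>"
  using infdist_Ints_eq[of "of_int \<lfloor>x\<rfloor> + m" "x + m"] infdist_Ints_floor[of x] by auto

lemma infdist_Ints_uminus: "infdist (- (x::real)) \<int> = infdist x \<int>"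
  using infdist_Ints_eq[of "- of_int \<lfloor>x\<rfloor> - 1" "- x"] infdist_Ints_floor[of x]
  by (auto simp: min.commute) linarith+

lemma infdist_Ints_le_half: "infdist (x::real) \<int> \<le> 1/2"
  unfolding infdist_Ints_floor by linarith

section \<open>Exponents from density bounds\<close>

lemma measure_cbox_Pair:
  assumes "a \<le> c" "b \<le> d"
  shows "measure lebesgue (cbox (a::real, b::real) (c, d)) = (c - a) * (d - b)"
  using assms by (simp add: content_cbox_if Basis_prod_def cbox_Pair_eq_0)

lemma mem_cbox_Pair_iff:
  "((t::real), (y::real)) \<in> cbox (a, b) (c, d) \<longleftrightarrow> a \<le> t \<and> t \<le> c \<and> b \<le> y \<and> y \<le> d"
  by (simp add: cbox_Pair_eq)

lemma mem_ball_PairD: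
  assumes "(t, y) \<in> ball ((x::real), (z::real)) r"
  shows "\<bar>t - x\<bar> < r" "\<bar>y - z\<bar> < r"
  using assms dist_fst_le[of "(x, z)" "(t, y)"] dist_snd_le[of "(x, z)" "(t, y)"]
  by (auto simp: dist_real_def)

lemma mem_ball_PairI:
  assumes "\<bar>t - x\<bar> \<le> r/2" "\<bar>y - z\<bar> \<le> r/2" "0 < r"
  shows "((t::real), (y::real)) \<in> ball ((x::real), (z::real)) r"
proof -
  have "dist (x, z) (t, y) = sqrt ((t - x)\<^sup>2 + (y - z)\<^sup>2)"
    by (simp add: dist_Pair_Pair dist_real_def power2_commute)
  also have "\<dots> \<le> sqrt ((r/2)\<^sup>2 + (r/2)\<^sup>2)"
    using assms by (intro real_sqrt_le_mono add_mono) (auto simp: abs_le_square_iff[symmetric])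
  also have "\<dots> < sqrt (r\<^sup>2)"
    using assms by (intro real_sqrt_less_mono) (simp add: power2_eq_square field_simps)
  finally show ?thesis using assms by simp
qed

lemma lmeasurable_Int_ball: "A \<in> sets lebesgue \<Longrightarrow> A \<inter> ball X r \<in> lmeasurable"
  by (metis Int_commute fmeasurable_Int_fmeasurable lmeasurable_ball)

lemma lmeasurable_Int_cball: "A \<in> sets lebesgue \<Longrightarrow> A \<inter> cball X r \<in> lmeasurable"
  by (metis Int_commute fmeasurable_Int_fmeasurable lmeasurable_cball)

lemma measure_Int_ball_le:
  assumes "A \<in> sets lebesgue" "0 < r"
  shows "measure lebesgue (A \<inter> ball ((x::real), (z::real)) r) \<le> 4 * r powr 2"
proof -
  have "A \<inter> ball (x, z) r \<subseteq> cbox (x - r, z - r) (x + r, z + r)"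
  proof
    fix p assume "p \<in> A \<inter> ball (x, z) r"
    moreover obtain t y where "p = (t, y)" by force
    ultimately show "p \<in> cbox (x - r, z - r) (x + r, z + r)"
      using mem_ball_PairD[of t y x z r] by (simp add: mem_cbox_Pair_iff abs_less_iff)
  qed
  then have "measure lebesgue (A \<inter> ball (x, z) r) \<le> measure lebesgue (cbox (x - r, z - r) (x + r, z + r))"
    using assms(1) by (intro measure_mono_fmeasurable lmeasurable_Int_ball) auto
  also have "\<dots> = 4 * r powr 2" using assms(2) by (subst measure_cbox_Pair) (auto simp: power2_eq_square)
  finally show ?thesis .
qed

lemma exponent_le_if_powr_le:
  fixes a b c C r0 :: real
  assumes c: "0 < c" and r0: "0 < r0" and le: "\<And>r. 0 < r \<Longrightarrow> r \<le> r0 \<Longrightarrow> c * r powr a \<le> C * r powr b"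
  shows "b \<le> a"
proof (rule ccontr)
  assume "\<not> b \<le> a"
  define e where "e = b - a"
  have e: "0 < e" using \<open>\<not> b \<le> a\<close> by (simp add: e_def)
  have "0 < c * r0 powr a" using c r0 by simp
  then have "0 < C * r0 powr b" using le[OF r0 order_refl] by linarith
  then have C: "0 < C" using r0 by (simp add: zero_less_mult_iff)
  define r where "r = min r0 ((c / (2 * C)) powr (1 / e))"
  have r: "0 < r" "r \<le> r0" using r0 c C by (auto simp: r_def)
  have "r powr e \<le> ((c / (2 * C)) powr (1 / e)) powr e"
    using r e by (intro powr_mono2) (auto simp: r_def)
  also have "\<dots> = c / (2 * C)" using e c C by (simp add: powr_powr)
  finally have small: "C * r powr e \<le> c / 2" using C by (simp add: field_simps)
  have "c * r powr a \<le> (C * r powr e) * r powr a"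
    using le[OF r] by (simp add: e_def powr_add[symmetric] mult_ac)
  then have "c \<le> C * r powr e" using r by simp
  then show False using small c by simp
qed

lemma Ew_eq_if_two_sided_bounds:
  assumes "0 < c" "0 < C" "0 < r0"
    and lower: "\<And>r. 0 < r \<Longrightarrow> r \<le> r0 \<Longrightarrow> c * r powr \<gamma> \<le> measure lebesgue (A \<inter> ball X r)"
    and upper: "\<And>r. 0 < r \<Longrightarrow> r \<le> r0 \<Longrightarrow> measure lebesgue (A \<inter> ball X r) \<le> C * r powr \<gamma>"
  shows "Ew A X = ereal (\<gamma> - 2)"
  unfolding Ew_def
proof (rule cSup_eq_maximum)
  show "ereal (\<gamma> - 2) \<in> ereal ` {\<beta>. \<exists>C r0. 0 < C \<and> 0 < r0 \<and>
    (\<forall>r. 0 < r \<and> r \<le> r0 \<longrightarrow> measure lebesgue (A \<inter> ball X r) \<le> C * r powr (\<beta> + 2))}"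
    using assms(2,3) upper by (intro imageI CollectI exI[of _ C] exI[of _ r0]) simp
next
  fix y assume "y \<in> ereal ` {\<beta>. \<exists>C r0. 0 < C \<and> 0 < r0 \<and>
    (\<forall>r. 0 < r \<and> r \<le> r0 \<longrightarrow> measure lebesgue (A \<inter> ball X r) \<le> C * r powr (\<beta> + 2))}"
  then obtain \<beta> C' r0' where y: "y = ereal \<beta>" and "0 < r0'"
    and le: "\<forall>r. 0 < r \<and> r \<le> r0' \<longrightarrow> measure lebesgue (A \<inter> ball X r) \<le> C' * r powr (\<beta> + 2)"
    by blast
  have "\<beta> + 2 \<le> \<gamma>"
  proof (rule exponent_le_if_powr_le[OF \<open>0 < c\<close>, of "min r0 r0'"])
    fix r assume "0 < r" "r \<le> min r0 r0'"
    then show "c * r powr \<gamma> \<le> C' * r powr (\<beta> + 2)" using lower[of r] le by force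
  qed (use assms \<open>0 < r0'\<close> in simp)
  then show "y \<le> ereal (\<gamma> - 2)" by (simp add: y)
qed

lemma Es_eq_if_two_sided_bounds:
  assumes "0 < c" "0 < C" "0 < r0"
    and lower: "\<And>r. 0 < r \<Longrightarrow> r \<le> r0 \<Longrightarrow> c * r powr \<gamma> \<le> measure lebesgue (A \<inter> ball X r)"
    and upper: "\<And>r. 0 < r \<Longrightarrow> r \<le> r0 \<Longrightarrow> measure lebesgue (A \<inter> ball X r) \<le> C * r powr \<gamma>"
  shows "Es A X = ereal (\<gamma> - 2)"
  unfolding Es_def
proof (rule cInf_eq_minimum)
  show "ereal (\<gamma> - 2) \<in> ereal ` {\<beta>. \<exists>C r0. 0 < C \<and> 0 < r0 \<and>
    (\<forall>r. 0 < r \<and> r \<le> r0 \<longrightarrow> C * r powr (\<beta> + 2) \<le> measure lebesgue (A \<inter> ball X r))}"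
    using assms(1,3) lower by (intro imageI CollectI exI[of _ c] exI[of _ r0]) simp
next
  fix y assume "y \<in> ereal ` {\<beta>. \<exists>C r0. 0 < C \<and> 0 < r0 \<and>
    (\<forall>r. 0 < r \<and> r \<le> r0 \<longrightarrow> C * r powr (\<beta> + 2) \<le> measure lebesgue (A \<inter> ball X r))}"
  then obtain \<beta> C' r0' where y: "y = ereal \<beta>" and "0 < C'" "0 < r0'"
    and ge: "\<forall>r. 0 < r \<and> r \<le> r0' \<longrightarrow> C' * r powr (\<beta> + 2) \<le> measure lebesgue (A \<inter> ball X r)"
    by blast
  have "\<gamma> \<le> \<beta> + 2"
  proof (rule exponent_le_if_powr_le[OF \<open>0 < C'\<close>, of "min r0 r0'"])
    fix r assume "0 < r" "r \<le> min r0 r0'"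
    then show "C' * r powr (\<beta> + 2) \<le> C * r powr \<gamma>" using upper[of r] ge by force
  qed (use assms \<open>0 < r0'\<close> in simp)
  then show "ereal (\<gamma> - 2) \<le> y" by (simp add: y)
qed

lemma poly2_deg_le_zero: "poly2_deg_le u (\<lambda>_. 0)"
  unfolding poly2_deg_le_def by (rule exI[of _ "\<lambda>i j. 0"]) (auto simp: fun_eq_iff)

lemma continuous_on_poly2:
  assumes "poly2_deg_le u P"
  shows "continuous_on UNIV P"
proof -
  obtain c :: "nat \<Rightarrow> nat \<Rightarrow> real" where
    "P = (\<lambda>(x, y). \<Sum>(i, j) \<in> {(i, j). real (i + j) \<le> u}. c i j * x ^ i * y ^ j)"
    using assms unfolding poly2_deg_le_def by blast
  then have "P = (\<lambda>z. \<Sum>ij\<in>{(i, j). real (i + j) \<le> u}. c (fst ij) (snd ij) * fst z ^ fst ij * snd z ^ snd ij)"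
    by (auto simp: fun_eq_iff split_def)
  then show ?thesis by (auto intro!: continuous_intros)
qed



lemma esssup_ge_if_pos_measure:
  assumes A: "A \<in> sets M" "0 < emeasure M A" "\<And>z. z \<in> A \<Longrightarrow> c \<le> f z"
  shows "c \<le> esssup M f"
proof (rule ccontr)
  assume less: "\<not> c \<le> esssup M f"
  have outside: "f z \<le> esssup M f \<longrightarrow> z \<notin> A" for z
  proof (intro impI notI)
    assume "f z \<le> esssup M f" "z \<in> A"
    then have "c \<le> esssup M f" using A(3) order_trans by blast
    then show False using less by simp
  qed
  have "AE z in M. z \<notin> A"
    using esssup_AE[of f M] by (rule AE_mp) (intro AE_I2 outside)
  moreover have "{z \<in> space M. \<not> z \<notin> A} = A" using sets.sets_into_space[OF A(1)] by auto
  ultimately have "emeasure M A = 0" using AE_iff_measurable[OF A(1)] by simp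
  with A(2) show False by simp
qed


lemma nn_integral_indicator_powr:
  assumes "0 < p" "S \<in> sets lebesgue" "K \<in> sets lebesgue"
  shows "(\<integral>\<^sup>+ X. ennreal (\<bar>indicator S X :: real\<bar> powr p) * indicator K X \<partial>lebesgue)
    = emeasure lebesgue (S \<inter> K)"
proof -
  have "(\<lambda>X. ennreal (\<bar>indicator S X :: real\<bar> powr p) * indicator K X) = indicator (S \<inter> K)"
    using assms(1) by (auto simp: fun_eq_iff indicator_def)
  then show ?thesis using assms by simp
qed

lemma Lp_loc_indicator:
  assumes "0 < p" "S \<in> sets lebesgue"
  shows "Lp_loc p (indicator S)"
  unfolding Lp_loc_def
proof (intro conjI allI impI)
  show "indicator S \<in> borel_measurable lebesgue" using assms(2) by simp
  fix K :: "(real \<times> real) set" assume "compact K"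
  then have K: "K \<in> lmeasurable" by (rule lmeasurable_compact)
  have "(\<integral>\<^sup>+ X. ennreal (\<bar>indicator S X :: real\<bar> powr p) * indicator K X \<partial>lebesgue) = emeasure lebesgue (S \<inter> K)"
    using nn_integral_indicator_powr assms K by blast
  also have "\<dots> \<le> emeasure lebesgue K" using K by (intro emeasure_mono) auto
  also have "\<dots> < \<infinity>" using fmeasurableD2[OF K] by (simp add: less_top)
  finally show "(\<integral>\<^sup>+ X. ennreal (\<bar>indicator S X :: real\<bar> powr p) * indicator K X \<partial>lebesgue) < \<infinity>" .
qed

lemma esssup_indicator_le_1:
  assumes "S \<in> sets lebesgue"
  shows "esssup (restrict_space lebesgue K) (\<lambda>X. ereal \<bar>indicator S X :: real\<bar>) \<le> 1"
  using assms by (intro esssup_I AE_I2 measurable_restrict_space1) (auto simp: indicator_def)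

lemma Linf_loc_indicator:
  assumes "S \<in> sets lebesgue"
  shows "Linf_loc (indicator S)"
  unfolding Linf_loc_def
proof (intro conjI allI impI)
  show "indicator S \<in> borel_measurable lebesgue" using assms by simp
  fix K :: "(real \<times> real) set"
  have "(1::ereal) < \<infinity>" by simp
  then show "esssup (restrict_space lebesgue K) (\<lambda>X. ereal \<bar>indicator S X :: real\<bar>) < \<infinity>"
    using esssup_indicator_le_1[OF assms] by (rule le_less_trans[rotated])
qed


lemma enn2real_nn_integral_ge_on_subset:
  assumes A: "A \<in> lmeasurable" "A \<subseteq> K" and b: "0 \<le> b" "\<And>z. z \<in> A \<Longrightarrow> b \<le> h z"
    and finite: "(\<integral>\<^sup>+ X. ennreal (h X) * indicator K X \<partial>lebesgue) < \<infinity>"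
  shows "b * measure lebesgue A \<le> enn2real (\<integral>\<^sup>+ X. ennreal (h X) * indicator K X \<partial>lebesgue)"
proof -
  have "ennreal b * emeasure lebesgue A = (\<integral>\<^sup>+ X. ennreal b * indicator A X \<partial>lebesgue)"
    using A(1) by (simp add: nn_integral_cmult_indicator)
  also have "\<dots> \<le> (\<integral>\<^sup>+ X. ennreal (h X) * indicator K X \<partial>lebesgue)"
    using A(2) b(2) by (intro nn_integral_mono) (auto simp: indicator_def ennreal_leI)
  finally have "enn2real (ennreal b * emeasure lebesgue A)
      \<le> enn2real (\<integral>\<^sup>+ X. ennreal (h X) * indicator K X \<partial>lebesgue)"
    using finite by (intro enn2real_mono) auto
  then show ?thesis using b(1) by (simp add: enn2real_mult measure_def)
qed

lemma powr_mean_le: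
  fixes m K \<rho> p \<gamma> :: real
  assumes "0 < \<rho>" "0 < p" "0 < K" "0 \<le> m" "m \<le> K * \<rho> powr \<gamma>"
  shows "(\<rho> powr (-2) * m) powr (1 / p) \<le> K powr (1 / p) * \<rho> powr (1 / p * (\<gamma> - 2))"
proof -
  have "\<rho> powr (-2) * m \<le> \<rho> powr (-2) * (K * \<rho> powr \<gamma>)"
    using assms by (intro mult_left_mono) auto
  also have "\<dots> = K * \<rho> powr (\<gamma> - 2)" using assms(1) by (simp add: powr_add[symmetric] mult_ac)
  finally have "(\<rho> powr (-2) * m) powr (1 / p) \<le> (K * \<rho> powr (\<gamma> - 2)) powr (1 / p)"
    using assms by (intro powr_mono2) auto
  also have "\<dots> = K powr (1 / p) * \<rho> powr (1 / p * (\<gamma> - 2))"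
    using assms by (simp add: powr_mult powr_powr mult.commute)
  finally show ?thesis .
qed

lemma le_powr_if_powr_mean_le:
  fixes m C \<rho> p u :: real
  assumes "0 < \<rho>" "0 < p" "0 < C" "0 \<le> m" "(\<rho> powr (-2) * m) powr (1 / p) \<le> C * \<rho> powr u"
  shows "m \<le> C powr p * \<rho> powr (u * p + 2)"
proof -
  have "\<rho> powr (-2) * m = ((\<rho> powr (-2) * m) powr (1 / p)) powr p"
    using assms by (simp add: powr_powr)
  also have "\<dots> \<le> (C * \<rho> powr u) powr p" using assms by (intro powr_mono2) auto
  also have "\<dots> = C powr p * \<rho> powr (u * p)" using assms by (simp add: powr_mult powr_powr)
  finally have "\<rho> powr 2 * (\<rho> powr (-2) * m) \<le> \<rho> powr 2 * (C powr p * \<rho> powr (u * p))"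
    by (intro mult_left_mono) auto
  moreover have "\<rho> powr 2 * \<rho> powr (-2) = 1" "\<rho> powr 2 * \<rho> powr (u * p) = \<rho> powr (u * p + 2)"
    using assms(1) by (simp_all add: powr_add[symmetric] add.commute del: powr_numeral)
  ultimately show ?thesis by (simp add: mult.assoc[symmetric]) (simp add: mult_ac)
qed

locale density_exponent =
  fixes S :: "(real \<times> real) set" and X0 :: "real \<times> real" and \<gamma> c C r0 :: real
  assumes S_sets: "S \<in> sets lebesgue" and c_pos: "0 < c" and C_pos: "0 < C" and r0_pos: "0 < r0"
    and upper: "\<And>r. 0 < r \<Longrightarrow> r \<le> r0 \<Longrightarrow> measure lebesgue (S \<inter> ball X0 r) \<le> C * r powr \<gamma>"
    and lower: "\<And>r. 0 < r \<Longrightarrow> r \<le> r0 \<Longrightarrow> c * r powr \<gamma> \<le> measure lebesgue (S \<inter> ball X0 r)"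
    and lower_compl: "\<And>r. 0 < r \<Longrightarrow> r \<le> r0 \<Longrightarrow> c * r powr \<gamma> \<le> measure lebesgue (- S \<inter> ball X0 r)"
begin

lemma gamma_ge_2: "2 \<le> \<gamma>"
proof (rule exponent_le_if_powr_le[OF c_pos r0_pos])
  fix r :: real assume r: "0 < r" "r \<le> r0"
  obtain x z where "X0 = (x, z)" by force
  then have "measure lebesgue (S \<inter> ball X0 r) \<le> 4 * r powr 2"
    using measure_Int_ball_le[OF S_sets r(1)] by simp
  then show "c * r powr \<gamma> \<le> 4 * r powr 2" using lower[OF r] by simp
qed

lemma measure_Int_cball_le:
  assumes "0 < \<rho>" "\<rho> \<le> r0 / 2"
  shows "measure lebesgue (S \<inter> cball X0 \<rho>) \<le> C * 2 powr \<gamma> * \<rho> powr \<gamma>"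
proof -
  have "S \<inter> cball X0 \<rho> \<in> lmeasurable" using S_sets by (rule lmeasurable_Int_cball)
  moreover have "S \<inter> cball X0 \<rho> \<subseteq> S \<inter> ball X0 (2 * \<rho>)" using assms by auto
  ultimately have "measure lebesgue (S \<inter> cball X0 \<rho>) \<le> measure lebesgue (S \<inter> ball X0 (2 * \<rho>))"
    using S_sets by (intro measure_mono_fmeasurable lmeasurable_Int_ball) auto
  also have "\<dots> \<le> C * (2 * \<rho>) powr \<gamma>" using upper assms by simp
  finally show ?thesis using assms by (simp add: powr_mult mult.assoc)
qed

lemma Tp_indicator:
  assumes "1 \<le> p"
  shows "Tp p (1 / p * (\<gamma> - 2)) (indicator S) X0"
proof -
  define K where "K = C * 2 powr \<gamma>"
  have K: "0 < K" using C_pos by (simp add: K_def)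
  have bound: "(let I = \<integral>\<^sup>+ X. ennreal (\<bar>indicator S X - 0\<bar> powr p) * indicator (cball X0 \<rho>) X \<partial>lebesgue
      in I < \<infinity> \<and> (\<rho> powr (-2) * enn2real I) powr (1 / p) \<le> K powr (1 / p) * \<rho> powr (1 / p * (\<gamma> - 2)))"
    if \<rho>: "0 < \<rho>" "\<rho> \<le> r0 / 2" for \<rho>
  proof -
    from fmeasurableD2[OF lmeasurable_Int_cball[OF S_sets]] have "emeasure lebesgue (S \<inter> cball X0 \<rho>) < \<infinity>"
      by (simp add: less_top)
    moreover have "(\<rho> powr (-2) * measure lebesgue (S \<inter> cball X0 \<rho>)) powr (1 / p)
        \<le> K powr (1 / p) * \<rho> powr (1 / p * (\<gamma> - 2))"
      using \<rho> assms K measure_Int_cball_le[OF \<rho>] by (intro powr_mean_le) (auto simp: K_def)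
    moreover have "(\<integral>\<^sup>+ X. ennreal (\<bar>indicator S X - 0\<bar> powr p) * indicator (cball X0 \<rho>) X \<partial>lebesgue)
        = emeasure lebesgue (S \<inter> cball X0 \<rho>)"
      using nn_integral_indicator_powr[OF _ S_sets, of p "cball X0 \<rho>"] assms by simp
    ultimately show ?thesis unfolding Let_def measure_def by simp
  qed
  show ?thesis
    unfolding Tp_def
  proof (intro conjI)
    show "Lp_loc p (indicator S)" using Lp_loc_indicator S_sets assms by simp
    show "- 2 / p \<le> 1 / p * (\<gamma> - 2)" using gamma_ge_2 assms by (simp add: field_simps)
    show "\<exists>R C P. 0 < R \<and> 0 < C \<and> poly2_deg_le (1 / p * (\<gamma> - 2)) P \<and>
      (\<forall>\<rho>. 0 < \<rho> \<and> \<rho> \<le> R \<longrightarrow>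
        (let I = \<integral>\<^sup>+ X. ennreal (\<bar>indicator S X - P X\<bar> powr p) * indicator (cball X0 \<rho>) X \<partial>lebesgue
         in I < \<infinity> \<and> (\<rho> powr (-2) * enn2real I) powr (1 / p) \<le> C * \<rho> powr (1 / p * (\<gamma> - 2))))"
      using bound r0_pos K poly2_deg_le_zero
      by (intro exI[of _ "r0 / 2"] exI[of _ "K powr (1 / p)"] exI[of _ "\<lambda>_. 0"]) auto
  qed
qed

text \<open>Near X0 the values of P stay within 1/4 of P X0, so P is at distance at least 1/4 from the
  indicator on all of S or on all of its complement.\<close>
lemma indicator_far_from_continuous:
  fixes P :: "real \<times> real \<Rightarrow> real"
  assumes "continuous_on UNIV P"
  shows "\<exists>\<rho>1>0. \<forall>\<rho>. 0 < \<rho> \<and> \<rho> \<le> \<rho>1 \<longrightarrow> (\<exists>A. A \<in> lmeasurable \<and> A \<subseteq> cball X0 \<rho> \<and>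
     c * \<rho> powr \<gamma> \<le> measure lebesgue A \<and> (\<forall>Z\<in>A. 1/4 \<le> \<bar>indicator S Z - P Z\<bar>))"
proof -
  obtain \<eta> where \<eta>: "0 < \<eta>" "\<And>Z. dist Z X0 < \<eta> \<Longrightarrow> dist (P Z) (P X0) < 1/4"
    using assms unfolding continuous_on_iff by (meson UNIV_I zero_less_divide_1_iff zero_less_numeral)
  define T where "T = (if 1/2 \<le> P X0 then - S else S)"
  have T_sets: "T \<in> sets lebesgue"
    using S_sets sets.compl_sets[OF S_sets] by (simp add: T_def Compl_eq_Diff_UNIV)
  have far: "1/4 \<le> \<bar>indicator S Z - P Z\<bar>" if "Z \<in> T \<inter> ball X0 \<eta>" for Z
  proof -
    have "\<bar>P Z - P X0\<bar> < 1/4" using \<eta>(2)[of Z] that by (simp add: dist_commute dist_real_def abs_minus_commute)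
    then have "P X0 - 1/4 < P Z" "P Z < P X0 + 1/4" unfolding abs_less_iff by linarith+
    then show ?thesis using that unfolding T_def by (cases "1/2 \<le> P X0") auto
  qed
  have lower_T: "c * \<rho> powr \<gamma> \<le> measure lebesgue (T \<inter> ball X0 \<rho>)" if "0 < \<rho>" "\<rho> \<le> r0" for \<rho>
    unfolding T_def using lower[OF that] lower_compl[OF that] by simp
  show ?thesis
  proof (intro exI[of _ "min \<eta> r0"] conjI allI impI)
    show "0 < min \<eta> r0" using \<eta>(1) r0_pos by simp
    fix \<rho> assume \<rho>: "0 < \<rho> \<and> \<rho> \<le> min \<eta> r0"
    have "\<forall>Z\<in>T \<inter> ball X0 \<rho>. 1/4 \<le> \<bar>indicator S Z - P Z\<bar>" using far \<rho> by auto
    moreover have "c * \<rho> powr \<gamma> \<le> measure lebesgue (T \<inter> ball X0 \<rho>)" using lower_T \<rho> by simp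
    ultimately show "\<exists>A. A \<in> lmeasurable \<and> A \<subseteq> cball X0 \<rho> \<and> c * \<rho> powr \<gamma> \<le> measure lebesgue A \<and>
        (\<forall>Z\<in>A. 1/4 \<le> \<bar>indicator S Z - P Z\<bar>)"
      using lmeasurable_Int_ball[OF T_sets] by (intro exI[of _ "T \<inter> ball X0 \<rho>"]) auto
  qed
qed

lemma esssup_indicator_minus_continuous_ge:
  fixes P :: "real \<times> real \<Rightarrow> real"
  assumes "continuous_on UNIV P"
  shows "\<exists>\<rho>1>0. \<forall>\<rho>. 0 < \<rho> \<and> \<rho> \<le> \<rho>1 \<longrightarrow>
    ereal (1/4) \<le> esssup (restrict_space lebesgue (cball X0 \<rho>)) (\<lambda>X. ereal \<bar>indicator S X - P X\<bar>)"
proof -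
  obtain \<rho>1 where "0 < \<rho>1" and far: "\<forall>\<rho>. 0 < \<rho> \<and> \<rho> \<le> \<rho>1 \<longrightarrow> (\<exists>A. A \<in> lmeasurable \<and>
     A \<subseteq> cball X0 \<rho> \<and> c * \<rho> powr \<gamma> \<le> measure lebesgue A \<and> (\<forall>Z\<in>A. 1/4 \<le> \<bar>indicator S Z - P Z\<bar>))"
    using indicator_far_from_continuous[OF assms] by blast
  have "ereal (1/4) \<le> esssup (restrict_space lebesgue (cball X0 \<rho>)) (\<lambda>X. ereal \<bar>indicator S X - P X\<bar>)"
    if \<rho>: "0 < \<rho>" "\<rho> \<le> \<rho>1" for \<rho>
  proof -
    obtain A where A: "A \<in> lmeasurable" "A \<subseteq> cball X0 \<rho>" "c * \<rho> powr \<gamma> \<le> measure lebesgue A"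
      "\<And>Z. Z \<in> A \<Longrightarrow> 1/4 \<le> \<bar>indicator S Z - P Z\<bar>"
      using far \<rho> by auto
    have "0 < c * \<rho> powr \<gamma>" using c_pos \<rho>(1) by simp
    then have "0 < emeasure lebesgue A" using A(1,3) by (simp add: emeasure_eq_measure2)
    have cs: "cball X0 \<rho> \<inter> space lebesgue \<in> sets lebesgue" by simp
    show ?thesis
    proof (rule esssup_ge_if_pos_measure)
      show "A \<in> sets (restrict_space lebesgue (cball X0 \<rho>))"
        using sets_restrict_space_iff[OF cs] fmeasurableD[OF A(1)] A(2) by blast
      show "0 < emeasure (restrict_space lebesgue (cball X0 \<rho>)) A"
        using emeasure_restrict_space[OF cs A(2)] \<open>0 < emeasure lebesgue A\<close> by simp
      show "ereal (1/4) \<le> ereal \<bar>indicator S z - P z\<bar>" if "z \<in> A" for z using A(4)[OF that] by simp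
    qed
  qed
  with \<open>0 < \<rho>1\<close> show ?thesis by blast
qed

lemma Tp_indicator_exponent_le:
  assumes p: "1 \<le> p" and T: "Tp p u (indicator S) X0"
  shows "u \<le> 1 / p * (\<gamma> - 2)"
proof -
  from T obtain R C' P where RC: "0 < R" "0 < C'" "poly2_deg_le u P"
    and B: "\<And>\<rho>. 0 < \<rho> \<Longrightarrow> \<rho> \<le> R \<Longrightarrow>
          (let I = \<integral>\<^sup>+ X. ennreal (\<bar>indicator S X - P X\<bar> powr p) * indicator (cball X0 \<rho>) X \<partial>lebesgue
           in I < \<infinity> \<and> (\<rho> powr (-2) * enn2real I) powr (1 / p) \<le> C' * \<rho> powr u)"
    unfolding Tp_def by blast
  obtain \<rho>1 where \<rho>1: "0 < \<rho>1" and far: "\<forall>\<rho>. 0 < \<rho> \<and> \<rho> \<le> \<rho>1 \<longrightarrow> (\<exists>A. A \<in> lmeasurable \<and>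
     A \<subseteq> cball X0 \<rho> \<and> c * \<rho> powr \<gamma> \<le> measure lebesgue A \<and> (\<forall>Z\<in>A. 1/4 \<le> \<bar>indicator S Z - P Z\<bar>))"
    using indicator_far_from_continuous[OF continuous_on_poly2[OF RC(3)]] by blast
  have "u * p + 2 \<le> \<gamma>"
  proof (rule exponent_le_if_powr_le[of "(1/4) powr p * c" "min R \<rho>1"])
    fix \<rho> :: real assume \<rho>: "0 < \<rho>" "\<rho> \<le> min R \<rho>1"
    then obtain A where A: "A \<in> lmeasurable" "A \<subseteq> cball X0 \<rho>" "c * \<rho> powr \<gamma> \<le> measure lebesgue A"
      "\<And>Z. Z \<in> A \<Longrightarrow> 1/4 \<le> \<bar>indicator S Z - P Z\<bar>"
      using far by auto
    define I where "I = \<integral>\<^sup>+ X. ennreal (\<bar>indicator S X - P X\<bar> powr p) * indicator (cball X0 \<rho>) X \<partial>lebesgue"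
    have I: "I < \<infinity>" "(\<rho> powr (-2) * enn2real I) powr (1 / p) \<le> C' * \<rho> powr u"
      using B[of \<rho>] \<rho> unfolding I_def Let_def by auto
    have "(1/4) powr p * c * \<rho> powr \<gamma> \<le> (1/4) powr p * measure lebesgue A"
      using A(3) by (simp add: mult.assoc)
    also have "\<dots> \<le> enn2real I"
      unfolding I_def using A I(1) p
      by (intro enn2real_nn_integral_ge_on_subset) (auto intro: powr_mono2 simp: I_def)
    also have "\<dots> \<le> C' powr p * \<rho> powr (u * p + 2)"
      using I(2) \<rho> p RC(2) by (intro le_powr_if_powr_mean_le) auto
    finally show "(1/4) powr p * c * \<rho> powr \<gamma> \<le> C' powr p * \<rho> powr (u * p + 2)" .
  qed (use c_pos RC(1) \<rho>1 in auto)
  then show ?thesis using p by (simp add: field_simps)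
qed

lemma Tinf_indicator_zero: "Tinf 0 (indicator S) X0"
  unfolding Tinf_def
proof (intro conjI Linf_loc_indicator S_sets order.refl)
  show "\<exists>R C P. 0 < R \<and> 0 < C \<and> poly2_deg_le 0 P \<and> (\<forall>\<rho>. 0 < \<rho> \<and> \<rho> \<le> R \<longrightarrow>
      esssup (restrict_space lebesgue (cball X0 \<rho>)) (\<lambda>X. ereal \<bar>indicator S X - P X\<bar>) \<le> ereal (C * \<rho> powr 0))"
    using esssup_indicator_le_1[OF S_sets] poly2_deg_le_zero
    by (intro exI[of _ 1] exI[of _ 1] exI[of _ "\<lambda>_. 0"]) (simp add: one_ereal_def)
qed

lemma Tinf_indicator_exponent_le:
  assumes "Tinf u (indicator S) X0"
  shows "u \<le> 0"
proof -
  from assms obtain R C' P where RC: "0 < R" "0 < C'" "poly2_deg_le u P"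
    and B: "\<And>\<rho>. 0 < \<rho> \<Longrightarrow> \<rho> \<le> R \<Longrightarrow>
      esssup (restrict_space lebesgue (cball X0 \<rho>)) (\<lambda>X. ereal \<bar>indicator S X - P X\<bar>) \<le> ereal (C' * \<rho> powr u)"
    unfolding Tinf_def by blast
  obtain \<rho>1 where "0 < \<rho>1" and far: "\<forall>\<rho>. 0 < \<rho> \<and> \<rho> \<le> \<rho>1 \<longrightarrow>
      ereal (1/4) \<le> esssup (restrict_space lebesgue (cball X0 \<rho>)) (\<lambda>X. ereal \<bar>indicator S X - P X\<bar>)"
    using esssup_indicator_minus_continuous_ge[OF continuous_on_poly2[OF RC(3)]] by blast
  show ?thesis
  proof (rule exponent_le_if_powr_le[of "1/4" "min R \<rho>1"])
    fix \<rho> :: real assume \<rho>: "0 < \<rho>" "\<rho> \<le> min R \<rho>1"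
    then have "ereal (1/4) \<le> esssup (restrict_space lebesgue (cball X0 \<rho>)) (\<lambda>X. ereal \<bar>indicator S X - P X\<bar>)"
      using far by simp
    also have "\<dots> \<le> ereal (C' * \<rho> powr u)" using B \<rho> by simp
    finally show "1/4 * \<rho> powr 0 \<le> C' * \<rho> powr u" using \<rho> by simp
  qed (use RC(1) \<open>0 < \<rho>1\<close> in auto)
qed

lemma up_exp_indicator:
  assumes "1 \<le> p"
  shows "up_exp p (indicator S) X0 = ereal (1 / p * (\<gamma> - 2))"
  unfolding up_exp_def
proof (rule cSup_eq_maximum)
  show "ereal (1 / p * (\<gamma> - 2)) \<in> ereal ` {u. Tp p u (indicator S) X0}"
    using Tp_indicator[OF assms] by blast
qed (use Tp_indicator_exponent_le[OF assms] in auto)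

lemma uinf_exp_indicator: "uinf_exp (indicator S) X0 = 0"
  unfolding uinf_exp_def zero_ereal_def
proof (rule cSup_eq_maximum)
  show "ereal 0 \<in> ereal ` {u. Tinf u (indicator S) X0}" using Tinf_indicator_zero by blast
qed (use Tinf_indicator_exponent_le in auto)

end
section \<open>Subgraphs with a cusp\<close>

definition subgraph :: "(real \<Rightarrow> real) \<Rightarrow> (real \<times> real) set" where
  "subgraph g = {(t, y). 0 \<le> t \<and> t \<le> 1 \<and> 0 \<le> y \<and> y \<le> g t}"

lemma closed_subgraph:
  assumes "continuous_on {0..1} g"
  shows "closed (subgraph g)"
proof -
  have "subgraph g = ({0..1} \<times> UNIV) \<inter> (\<lambda>p. (snd p, g (fst p) - snd p)) -` ({0..} \<times> {0..})"
    by (auto simp: subgraph_def)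
  moreover have "continuous_on ({0..1} \<times> UNIV) (\<lambda>p. (snd p, g (fst p) - snd p))"
    by (intro continuous_intros continuous_on_compose2[OF assms]) auto
  ultimately show ?thesis
    by (simp add: closed_Times continuous_closed_preimage)
qed

locale cusp =
  fixes g :: "real \<Rightarrow> real" and x \<alpha> c C \<delta> :: real
  assumes continuous: "continuous_on {0..1} g"
    and nonneg: "\<And>t. t \<in> {0..1} \<Longrightarrow> 0 \<le> g t"
    and alpha_pos: "0 < \<alpha>" and alpha_le_1: "\<alpha> \<le> 1"
    and c_pos: "0 < c" and C_ge_1: "1 \<le> C" and delta_pos: "0 < \<delta>"
    and cusp: "\<And>t. \<bar>t - x\<bar> \<le> \<delta> \<Longrightarrow>
      t \<in> {0..1} \<and> c * \<bar>t - x\<bar> powr \<alpha> \<le> g x - g t \<and> g x - g t \<le> C * \<bar>t - x\<bar> powr \<alpha>"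
begin

abbreviation S where "S \<equiv> subgraph g"

lemma subgraph_sets: "S \<in> sets lebesgue"
  using closed_subgraph[OF continuous] by (simp add: borel_closed)

lemma compl_subgraph_sets: "- S \<in> sets lebesgue"
  using closed_subgraph[OF continuous] by (simp add: borel_open open_Compl)

lemma peak_value_pos: "0 < g x"
proof -
  have "c * \<bar>(x + \<delta>) - x\<bar> powr \<alpha> \<le> g x - g (x + \<delta>)" "x + \<delta> \<in> {0..1}"
    using cusp[of "x + \<delta>"] delta_pos by auto
  moreover have "0 < c * \<bar>(x + \<delta>) - x\<bar> powr \<alpha>" using c_pos delta_pos by simp
  ultimately show ?thesis using nonneg[of "x + \<delta>"] by linarith
qed

definition C_up where "C_up = 4 * (1 / c) powr (1 / \<alpha>)"
definition c_low where "c_low = (1 / (4 * C)) powr (1 / \<alpha>) / 2"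

lemma C_up_pos: "0 < C_up" using c_pos by (simp add: C_up_def)
lemma c_low_pos: "0 < c_low" using C_ge_1 by (simp add: c_low_def)

text \<open>Inside the ball the subgraph lies within horizontal distance (r/c)^(1/alpha) of x.\<close>
lemma subgraph_measure_upper:
  assumes r: "0 < r" "r \<le> \<delta>"
  shows "measure lebesgue (S \<inter> ball (x, g x) r) \<le> C_up * r powr (1 / \<alpha> + 1)"
proof -
  define d where "d = (r / c) powr (1 / \<alpha>)"
  have "S \<inter> ball (x, g x) r \<subseteq> cbox (x - d, g x - r) (x + d, g x + r)"
  proof
    fix p assume p: "p \<in> S \<inter> ball (x, g x) r"
    obtain t y where pe: "p = (t, y)" by force
    have tb: "\<bar>t - x\<bar> < r" "\<bar>y - g x\<bar> < r" using mem_ball_PairD p pe by auto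
    have "c * \<bar>t - x\<bar> powr \<alpha> \<le> g x - g t" using cusp[of t] tb r by simp
    moreover have "y \<le> g t" using p pe by (auto simp: subgraph_def)
    ultimately have "\<bar>t - x\<bar> powr \<alpha> < r / c" using tb c_pos by (simp add: field_simps abs_less_iff)
    then have "(\<bar>t - x\<bar> powr \<alpha>) powr (1 / \<alpha>) \<le> (r / c) powr (1 / \<alpha>)"
      using alpha_pos by (intro powr_mono2) auto
    then have "\<bar>t - x\<bar> \<le> d" using alpha_pos by (simp add: d_def powr_powr)
    then show "p \<in> cbox (x - d, g x - r) (x + d, g x + r)"
      using tb pe by (simp add: mem_cbox_Pair_iff abs_le_iff abs_less_iff)
  qed
  then have "measure lebesgue (S \<inter> ball (x, g x) r) \<le> measure lebesgue (cbox (x - d, g x - r) (x + d, g x + r))"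
    using subgraph_sets by (intro measure_mono_fmeasurable lmeasurable_Int_ball) auto
  also have "\<dots> = 4 * d * r" using r by (subst measure_cbox_Pair) (auto simp: d_def)
  also have "\<dots> = C_up * r powr (1 / \<alpha> + 1)"
  proof -
    have "d = r powr (1 / \<alpha>) * (1 / c) powr (1 / \<alpha>)"
      unfolding d_def using powr_mult[of r "1 / c" "1 / \<alpha>"] r c_pos by simp
    then show ?thesis using r by (simp add: C_up_def powr_add)
  qed
  finally show ?thesis .
qed


text \<open>The box of half-width (r / 4C)^(1/alpha) between heights g x - r/2 and g x - r/4 lies
  in the subgraph, because g drops by at most r/4 on it.\<close>
lemma subgraph_measure_lower:
  assumes r: "0 < r" "r \<le> 1" "r \<le> \<delta>" "r \<le> g x"
  shows "c_low * r powr (1 / \<alpha> + 1) \<le> measure lebesgue (S \<inter> ball (x, g x) r)"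
proof -
  define d where "d = (r / (4 * C)) powr (1 / \<alpha>)"
  have q: "0 \<le> r / (4 * C)" "r / (4 * C) \<le> 1" using r C_ge_1 by (auto simp: field_simps)
  have "d \<le> (r / (4 * C)) powr 1"
    unfolding d_def using q alpha_pos alpha_le_1 by (intro powr_mono') (auto simp: field_simps)
  also have "\<dots> \<le> r / 4" using r C_ge_1 divide_left_mono[of 4 "4 * C" r] by simp
  finally have d4: "d \<le> r / 4" .
  have dpow: "d powr \<alpha> = r / (4 * C)" unfolding d_def using alpha_pos q r C_ge_1 by (simp add: powr_powr)
  have box: "cbox (x - d, g x - r/2) (x + d, g x - r/4) \<subseteq> S \<inter> ball (x, g x) r"
  proof
    fix p assume p: "p \<in> cbox (x - d, g x - r/2) (x + d, g x - r/4)"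
    obtain t y where pe: "p = (t, y)" by force
    have tb: "\<bar>t - x\<bar> \<le> d" "g x - r/2 \<le> y" "y \<le> g x - r/4"
      using p pe by (auto simp: mem_cbox_Pair_iff abs_le_iff)
    then have td: "\<bar>t - x\<bar> \<le> \<delta>" using d4 r by simp
    have "g x - g t \<le> C * \<bar>t - x\<bar> powr \<alpha>" using cusp[OF td] by simp
    also have "\<dots> \<le> C * d powr \<alpha>" using C_ge_1 tb alpha_pos by (intro mult_left_mono powr_mono2) auto
    also have "\<dots> = r / 4" using dpow C_ge_1 by simp
    finally have "p \<in> S" using pe tb r cusp[OF td] by (simp add: subgraph_def)
    moreover have "p \<in> ball (x, g x) r" unfolding pe using tb d4 r by (intro mem_ball_PairI) auto
    ultimately show "p \<in> S \<inter> ball (x, g x) r" by simp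
  qed
  have "c_low * r powr (1 / \<alpha> + 1) = (2 * d) * (r / 4)"
  proof -
    have "d = r powr (1 / \<alpha>) * (1 / (4 * C)) powr (1 / \<alpha>)"
      unfolding d_def using powr_mult[of r "1 / (4 * C)" "1 / \<alpha>"] r C_ge_1 by simp
    then show ?thesis using r by (simp add: c_low_def powr_add)
  qed
  also have "\<dots> = measure lebesgue (cbox (x - d, g x - r/2) (x + d, g x - r/4))"
    using r by (subst measure_cbox_Pair) (auto simp: d_def)
  also have "\<dots> \<le> measure lebesgue (S \<inter> ball (x, g x) r)"
    using box subgraph_sets by (intro measure_mono_fmeasurable lmeasurable_Int_ball) auto
  finally show ?thesis .
qed

lemma compl_subgraph_measure_lower:
  assumes r: "0 < r" "r \<le> \<delta>"
  shows "1/4 * r powr 2 \<le> measure lebesgue (- S \<inter> ball (x, g x) r)"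
proof -
  have box: "cbox (x - r/2, g x + r/4) (x + r/2, g x + r/2) \<subseteq> - S \<inter> ball (x, g x) r"
  proof
    fix p assume p: "p \<in> cbox (x - r/2, g x + r/4) (x + r/2, g x + r/2)"
    obtain t y where pe: "p = (t, y)" by force
    have tb: "\<bar>t - x\<bar> \<le> r/2" "g x + r/4 \<le> y" "y \<le> g x + r/2"
      using p pe unfolding mem_cbox_Pair_iff abs_le_iff by auto
    then have "\<bar>t - x\<bar> \<le> \<delta>" using r by simp
    from cusp[OF this] have "g t \<le> g x" using c_pos by (smt (verit) powr_ge_zero mult_nonneg_nonneg)
    then have "p \<notin> S" using pe tb r by (auto simp: subgraph_def)
    moreover have "p \<in> ball (x, g x) r" unfolding pe using tb r by (intro mem_ball_PairI) auto
    ultimately show "p \<in> - S \<inter> ball (x, g x) r" by simp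
  qed
  have "1/4 * r powr 2 = measure lebesgue (cbox (x - r/2, g x + r/4) (x + r/2, g x + r/2))"
    using r by (subst measure_cbox_Pair) (auto simp: power2_eq_square)
  also have "\<dots> \<le> measure lebesgue (- S \<inter> ball (x, g x) r)"
    using box compl_subgraph_sets by (intro measure_mono_fmeasurable lmeasurable_Int_ball) auto
  finally show ?thesis .
qed


lemma compl_subgraph_measure_lower_powr:
  assumes "0 < r" "r \<le> 1" "r \<le> \<delta>"
  shows "1/4 * r powr (1 / \<alpha> + 1) \<le> measure lebesgue (- S \<inter> ball (x, g x) r)"
proof -
  have "r powr (1 / \<alpha> + 1) \<le> r powr 2"
    using assms alpha_pos alpha_le_1 by (intro powr_mono') (auto simp: field_simps)
  then show ?thesis using compl_subgraph_measure_lower[of r] assms by simp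
qed

end


context cusp
begin

lemma subgraph_density_exponent:
  "density_exponent S (x, g x) (1 / \<alpha> + 1) (min c_low (1/4)) C_up (min 1 (min \<delta> (g x)))"
proof
  fix r assume r: "0 < r" "r \<le> min 1 (min \<delta> (g x))"
  show "measure lebesgue (S \<inter> ball (x, g x) r) \<le> C_up * r powr (1 / \<alpha> + 1)"
    using subgraph_measure_upper r by simp
  show "min c_low (1/4) * r powr (1 / \<alpha> + 1) \<le> measure lebesgue (S \<inter> ball (x, g x) r)"
    using subgraph_measure_lower[of r] r by (smt (verit) mult_right_mono powr_ge_zero)
  show "min c_low (1/4) * r powr (1 / \<alpha> + 1) \<le> measure lebesgue (- S \<inter> ball (x, g x) r)"
    using compl_subgraph_measure_lower_powr[of r] r by (smt (verit) mult_right_mono powr_ge_zero)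
qed (use subgraph_sets c_low_pos C_up_pos delta_pos peak_value_pos in auto)

end

section \<open>Local maxima of the Takagi-type function\<close>

lemma eq_if_abs_diff_le_dyadic:
  fixes u v :: real
  assumes "\<And>k::nat. \<bar>u - v\<bar> \<le> 1 / 2 ^ k"
  shows "u = v"
proof (rule ccontr)
  assume "u \<noteq> v"
  then obtain k where "(1/2::real) ^ k < \<bar>u - v\<bar>" using real_arch_pow_inv[of "\<bar>u - v\<bar>" "1/2"] by auto
  with assms[of k] show False by (simp add: power_one_over)
qed

locale takagi =
  fixes \<alpha> :: real
  assumes alpha_pos: "0 < \<alpha>" and alpha_less_1: "\<alpha> < 1"
begin

abbreviation F where "F \<equiv> Fw \<alpha>"

definition lam where "lam = 2 powr (- \<alpha>)"
definition mu where "mu = 1 / (2 * lam)"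

lemma lam_gt_half: "1/2 < lam" and lam_less_1: "lam < 1"
proof -
  have "(2::real) powr (-1) < 2 powr (- \<alpha>)" using alpha_less_1 by (intro powr_less_mono) auto
  then show "1/2 < lam" by (simp add: lam_def powr_minus)
  have "(2::real) powr (- \<alpha>) < 2 powr 0" using alpha_pos by (intro powr_less_mono) auto
  then show "lam < 1" by (simp add: lam_def)
qed

lemma lam_pos: "0 < lam" using lam_gt_half by simp

lemma mu_gt_half: "1/2 < mu" and mu_less_1: "mu < 1"
  using lam_gt_half lam_less_1 by (auto simp: mu_def field_simps)

lemma mu_pos: "0 < mu" using mu_gt_half by simp

lemma mu_one_minus_mu_pos: "0 < mu * (1 - mu)" using mu_pos mu_less_1 by simp

lemma lam_mu: "lam * mu = 1/2" using lam_pos by (simp add: mu_def)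

lemma lam_powr_alpha: "lam * 2 powr \<alpha> = 1"
  by (simp add: lam_def powr_add[symmetric])

lemma lam_power_powr_alpha: "lam ^ n * (2 ^ n) powr \<alpha> = 1"
proof -
  have "(2 ^ n) powr \<alpha> = (2 powr \<alpha>) ^ n"
    by (simp add: powr_realpow[symmetric] powr_powr mult.commute)
  then show ?thesis using lam_powr_alpha by (simp add: power_mult_distrib[symmetric])
qed

lemma F_series: "F x = (\<Sum>j. lam ^ j * infdist (2 ^ j * x) \<int>)"
proof -
  have "2 powr (- \<alpha> * real j) = lam ^ j" for j
    by (subst powr_realpow[symmetric]) (auto simp: lam_def powr_powr)
  then show ?thesis by (simp add: Fw_def)
qed

lemma F_term_bound: "norm (lam ^ n * infdist (2 ^ n * (x::real)) \<int>) \<le> lam ^ n"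
  using infdist_Ints_le_half[of "2 ^ n * x"] infdist_nonneg[of "2 ^ n * x" \<int>] lam_pos
  by (simp add: abs_mult mult_left_le)

lemma summable_lam_power: "summable (\<lambda>n. lam ^ n)"
  using lam_pos lam_less_1 by (intro summable_geometric) auto

lemma F_summable: "summable (\<lambda>j. lam ^ j * infdist (2 ^ j * (x::real)) \<int>)"
  by (rule summable_comparison_test[OF _ summable_lam_power]) (use F_term_bound in blast)

lemma F_functional_eq: "F x = infdist x \<int> + lam * F (2 * x)"
proof -
  have "(\<Sum>n. lam ^ Suc n * infdist (2 ^ Suc n * x) \<int>) = F x - infdist x \<int>"
    using suminf_split_head[OF F_summable[of x]] by (simp add: F_series)
  moreover have "(\<Sum>n. lam ^ Suc n * infdist (2 ^ Suc n * x) \<int>) = lam * F (2 * x)"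
    unfolding F_series using F_summable[of "2*x"]
    by (subst suminf_mult[symmetric]) (auto simp: mult_ac)
  ultimately show ?thesis by simp
qed

lemma F_nonneg: "0 \<le> F x"
  unfolding F_series using F_summable[of x] lam_pos
  by (intro suminf_nonneg) (auto simp: infdist_nonneg)

lemma F_add_1: "F (x + 1) = F x"
proof -
  have "infdist (2 ^ j * (x + 1)) \<int> = infdist (2 ^ j * x) \<int>" for j :: nat
    using infdist_Ints_add_Ints[of "2 ^ j" "2 ^ j * x"] by (simp add: algebra_simps)
  then show ?thesis by (simp add: F_series)
qed

lemma F_uminus: "F (- x) = F x"
  using infdist_Ints_uminus[of "2 ^ _ * x"] by (simp add: F_series)

lemma F_one_minus: "F (1 - x) = F x"
  using F_add_1[of "- x"] F_uminus[of x] by simp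

lemma continuous_on_F: "continuous_on S F"
proof -
  have "uniform_limit UNIV (\<lambda>n (x::real). \<Sum>i<n. lam ^ i * infdist (2 ^ i * x) \<int>)
       (\<lambda>x. \<Sum>i. lam ^ i * infdist (2 ^ i * x) \<int>) sequentially"
    using F_term_bound summable_lam_power by (rule Weierstrass_m_test)
  then have "continuous_on UNIV (\<lambda>x::real. \<Sum>i. lam ^ i * infdist (2 ^ i * x) \<int>)"
    by (rule uniform_limit_theorem[rotated])
       (auto intro!: always_eventually continuous_intros continuous_on_infdist)
  then show ?thesis by (auto simp: F_series[abs_def] intro: continuous_on_subset)
qed

lemma F_0: "F 0 = 0" by (simp add: F_series)

lemma F_1: "F 1 = 0" using F_add_1[of 0] F_0 by simp

lemma F_lower_half: "0 \<le> u \<Longrightarrow> u \<le> 1/2 \<Longrightarrow> F u = u + lam * F (2 * u)"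
  using F_functional_eq[of u] infdist_Ints_unit[of u] by simp

lemma F_upper_half: "1/2 \<le> u \<Longrightarrow> u \<le> 1 \<Longrightarrow> F u = 1 - u + lam * F (2 * u - 1)"
  using F_functional_eq[of u] infdist_Ints_unit[of u] F_add_1[of "2*u-1"] by simp

lemma F_half: "F (1/2) = 1/2" using F_lower_half[of "1/2"] F_1 by simp

definition Fmax where "Fmax = 1 / (3 * (1 - lam))"

lemma Fmax_eq: "Fmax = 1/3 + lam * Fmax"
  using lam_less_1 by (simp add: Fmax_def field_simps)

lemma Fmax_gt: "2/3 < Fmax" using lam_gt_half lam_less_1 by (simp add: Fmax_def field_simps)

lemma F_one_third: "F (1/3) = Fmax" and F_two_thirds: "F (2/3) = Fmax"
proof -
  have "F (1/3) = 1/3 + lam * F (1/3)" using F_lower_half[of "1/3"] F_one_minus[of "1/3"] by simp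
  then show "F (1/3) = Fmax" using lam_less_1 by (simp add: Fmax_def field_simps)
  then show "F (2/3) = Fmax" using F_one_minus[of "1/3"] by simp
qed

definition tilted where "tilted \<sigma> u = \<sigma> * u + F u"

lemma tilted_lower_half:
  "0 \<le> u \<Longrightarrow> u \<le> 1/2 \<Longrightarrow> tilted \<sigma> u = lam * tilted (mu * (\<sigma> + 1)) (2 * u)"
  using F_lower_half[of u] lam_mu by (simp add: tilted_def algebra_simps)

lemma tilted_upper_half:
  "1/2 \<le> u \<Longrightarrow> u \<le> 1 \<Longrightarrow>
   tilted \<sigma> u = (\<sigma> + 1) / 2 + lam * tilted (mu * (\<sigma> - 1)) (2 * u - 1)"
proof -
  assume u: "1/2 \<le> u" "u \<le> 1"
  have "lam * (mu * (\<sigma> - 1) * (2 * u - 1)) = (\<sigma> - 1) * (2 * u - 1) / 2"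
    by (simp add: mult.assoc[symmetric] lam_mu)
  then have "(\<sigma> + 1) / 2 + lam * tilted (mu * (\<sigma> - 1)) (2 * u - 1)
      = (\<sigma> + 1) / 2 + (\<sigma> - 1) * (2 * u - 1) / 2 + lam * F (2 * u - 1)"
    by (simp add: tilted_def distrib_left)
  then show ?thesis using F_upper_half[OF u] by (simp add: tilted_def field_simps)
qed

lemma tilted_one_minus: "tilted (- \<sigma>) (1 - u) = tilted \<sigma> u - \<sigma>"
  using F_one_minus[of u] by (simp add: tilted_def algebra_simps)

lemma tilted_one_minus_diff: "tilted \<sigma> (1 - u) - tilted \<sigma> u = \<sigma> * (1 - 2 * u)"
  using F_one_minus[of u] by (simp add: tilted_def algebra_simps)

lemma continuous_on_tilted: "continuous_on S (tilted \<sigma>)"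
  unfolding tilted_def[abs_def] by (intro continuous_intros continuous_on_F)

lemma tilted_half_not_max: "\<exists>v\<in>{0..1}. tilted \<sigma> (1/2) < tilted \<sigma> v"
proof -
  have half: "tilted \<sigma> (1/2) = \<sigma>/2 + 1/2" using F_half by (simp add: tilted_def)
  consider "1 < \<sigma>" | "\<sigma> < -1" | "0 \<le> \<sigma> \<and> \<sigma> \<le> 1" | "-1 \<le> \<sigma> \<and> \<sigma> < 0" by linarith
  then show ?thesis
  proof cases
    case 1 then show ?thesis using half F_1 by (intro bexI[of _ 1]) (auto simp: tilted_def)
  next
    case 2 then show ?thesis using half F_0 by (intro bexI[of _ 0]) (auto simp: tilted_def)
  next
    case 3 then show ?thesis
      using half F_two_thirds Fmax_gt by (intro bexI[of _ "2/3"]) (auto simp: tilted_def)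
  next
    case 4 then show ?thesis
      using half F_one_third Fmax_gt by (intro bexI[of _ "1/3"]) (auto simp: tilted_def)
  qed
qed

definition tilted_piece where
  "tilted_piece H n a \<sigma> A \<longleftrightarrow>
     (\<forall>t\<in>{a..a + 1 / 2 ^ n}. H t = A + lam ^ n * tilted \<sigma> (2 ^ n * (t - a)))"

lemma tilted_piece_F: "tilted_piece F 0 0 0 0"
  by (simp add: tilted_piece_def tilted_def)

lemma tilted_piece_left:
  assumes "tilted_piece H n a \<sigma> A"
  shows "tilted_piece H (Suc n) a (mu * (\<sigma> + 1)) A"
  unfolding tilted_piece_def
proof
  fix t assume t: "t \<in> {a..a + 1 / 2 ^ Suc n}"
  then have "t \<in> {a..a + 1 / 2 ^ n}" by (auto simp: field_simps)
  then have "H t = A + lam ^ n * tilted \<sigma> (2 ^ n * (t - a))"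
    using assms by (auto simp: tilted_piece_def)
  moreover have "0 \<le> 2 ^ n * (t - a)" "2 ^ n * (t - a) \<le> 1/2" using t by (auto simp: field_simps)
  ultimately show "H t = A + lam ^ Suc n * tilted (mu * (\<sigma> + 1)) (2 ^ Suc n * (t - a))"
    using tilted_lower_half[of "2 ^ n * (t - a)" \<sigma>] by (simp add: mult_ac)
qed

lemma tilted_piece_right:
  assumes "tilted_piece H n a \<sigma> A"
  shows "tilted_piece H (Suc n) (a + 1 / 2 ^ Suc n) (mu * (\<sigma> - 1)) (A + lam ^ n * ((\<sigma> + 1) / 2))"
  unfolding tilted_piece_def
proof
  fix t assume t: "t \<in> {a + 1 / 2 ^ Suc n..a + 1 / 2 ^ Suc n + 1 / 2 ^ Suc n}"
  moreover have "0 \<le> 1 / (2::real) ^ Suc n" "1 / (2::real) ^ Suc n + 1 / 2 ^ Suc n = 1 / 2 ^ n"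
    by simp_all
  ultimately have "t \<in> {a..a + 1 / 2 ^ n}" by auto
  then have "H t = A + lam ^ n * tilted \<sigma> (2 ^ n * (t - a))"
    using assms by (auto simp: tilted_piece_def)
  moreover have "1/2 \<le> 2 ^ n * (t - a)" "2 ^ n * (t - a) \<le> 1" using t by (auto simp: field_simps)
  moreover have "2 * (2 ^ n * (t - a)) - 1 = 2 ^ Suc n * (t - (a + 1 / 2 ^ Suc n))"
    by (simp add: field_simps)
  ultimately show "H t = A + lam ^ n * ((\<sigma> + 1) / 2) +
      lam ^ Suc n * tilted (mu * (\<sigma> - 1)) (2 ^ Suc n * (t - (a + 1 / 2 ^ Suc n)))"
    using tilted_upper_half[of "2 ^ n * (t - a)" \<sigma>] by (simp add: algebra_simps)
qed

definition peak_piece where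
  "peak_piece H x n a \<sigma> A \<longleftrightarrow> tilted_piece H n a \<sigma> A \<and> 0 \<le> a \<and> a + 1 / 2 ^ n \<le> 1 \<and>
     x \<in> {a..a + 1 / 2 ^ n} \<and> (\<forall>t\<in>{a..a + 1 / 2 ^ n}. H t \<le> H x)"

lemma peak_piece_rescaled_max:
  assumes "peak_piece H x n a \<sigma> A"
  shows "2 ^ n * (x - a) \<in> {0..1}" "\<And>v. v \<in> {0..1} \<Longrightarrow> tilted \<sigma> v \<le> tilted \<sigma> (2 ^ n * (x - a))"
proof -
  from assms have piece: "tilted_piece H n a \<sigma> A" and x: "x \<in> {a..a + 1 / 2 ^ n}"
    and max: "\<And>t. t \<in> {a..a + 1 / 2 ^ n} \<Longrightarrow> H t \<le> H x"
    unfolding peak_piece_def by auto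
  show "2 ^ n * (x - a) \<in> {0..1}" using x by (auto simp: field_simps)
  fix v :: real assume v: "v \<in> {0..1}"
  define t where "t = a + v / 2 ^ n"
  have t: "t \<in> {a..a + 1 / 2 ^ n}" using v by (auto simp: t_def field_simps)
  have "H t = A + lam ^ n * tilted \<sigma> v" "H x = A + lam ^ n * tilted \<sigma> (2 ^ n * (x - a))"
    using piece t x unfolding tilted_piece_def t_def by auto
  then show "tilted \<sigma> v \<le> tilted \<sigma> (2 ^ n * (x - a))" using max[OF t] lam_pos by simp
qed

lemma peak_piece_subpiece:
  assumes "peak_piece H x n a \<sigma> A" "tilted_piece H (Suc n) a' \<sigma>' A'"
    and "a \<le> a'" "a' + 1 / 2 ^ Suc n \<le> a + 1 / 2 ^ n" "x \<in> {a'..a' + 1 / 2 ^ Suc n}"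
  shows "peak_piece H x (Suc n) a' \<sigma>' A'"
  using assms unfolding peak_piece_def by auto

lemma peak_position_ne_half: "peak_piece H x n a \<sigma> A \<Longrightarrow> 2 ^ n * (x - a) \<noteq> 1/2"
  using peak_piece_rescaled_max tilted_half_not_max by (metis not_le)

lemma peak_piece_right:
  assumes peak: "peak_piece H x n a \<sigma> A" and y: "1/2 < 2 ^ n * (x - a)"
  shows "0 \<le> \<sigma>"
    "peak_piece H x (Suc n) (a + 1 / 2 ^ Suc n) (mu * (\<sigma> - 1)) (A + lam ^ n * ((\<sigma> + 1) / 2))"
proof -
  note max = peak_piece_rescaled_max[OF peak]
  show "0 \<le> \<sigma>"
  proof (rule ccontr)
    assume "\<not> 0 \<le> \<sigma>"
    then have "0 < tilted \<sigma> (1 - 2 ^ n * (x - a)) - tilted \<sigma> (2 ^ n * (x - a))"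
      using y tilted_one_minus_diff by (simp add: mult_neg_neg)
    then show False using max(1) max(2)[of "1 - 2 ^ n * (x - a)"] by auto
  qed
  have a: "a \<le> a + 1 / 2 ^ Suc n" "a + 1 / 2 ^ Suc n + 1 / 2 ^ Suc n = a + 1 / 2 ^ n"
    by (simp_all add: field_simps)
  then show "peak_piece H x (Suc n) (a + 1 / 2 ^ Suc n) (mu * (\<sigma> - 1)) (A + lam ^ n * ((\<sigma> + 1) / 2))"
    using peak y tilted_piece_right[of H n a \<sigma> A]
    by (intro peak_piece_subpiece[OF peak]) (auto simp: peak_piece_def field_simps)
qed

lemma peak_piece_left:
  assumes peak: "peak_piece H x n a \<sigma> A" and y: "2 ^ n * (x - a) < 1/2"
  shows "\<sigma> \<le> 0" "peak_piece H x (Suc n) a (mu * (\<sigma> + 1)) A"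
proof -
  note max = peak_piece_rescaled_max[OF peak]
  show "\<sigma> \<le> 0"
  proof (rule ccontr)
    assume "\<not> \<sigma> \<le> 0"
    then have "0 < tilted \<sigma> (1 - 2 ^ n * (x - a)) - tilted \<sigma> (2 ^ n * (x - a))"
      using y tilted_one_minus_diff by simp
    then show False using max(1) max(2)[of "1 - 2 ^ n * (x - a)"] by auto
  qed
  show "peak_piece H x (Suc n) a (mu * (\<sigma> + 1)) A"
    using peak y tilted_piece_left[of H n a \<sigma> A]
    by (intro peak_piece_subpiece[OF peak]) (auto simp: peak_piece_def field_simps)
qed

lemma peak_piece_step:
  assumes peak: "peak_piece H x n a \<sigma> A"
  shows "\<exists>a' \<sigma>' A'. peak_piece H x (Suc n) a' \<sigma>' A' \<and> \<bar>\<sigma>'\<bar> = mu * \<bar>\<bar>\<sigma>\<bar> - 1\<bar>"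
proof (cases "1/2 < 2 ^ n * (x - a)")
  case True
  note right = peak_piece_right[OF peak True]
  have "\<bar>mu * (\<sigma> - 1)\<bar> = mu * \<bar>\<bar>\<sigma>\<bar> - 1\<bar>" using right(1) mu_pos by (simp add: abs_mult)
  with right(2) show ?thesis by blast
next
  case False
  then have "2 ^ n * (x - a) < 1/2" using peak_position_ne_half[OF peak] by simp
  note left = peak_piece_left[OF peak this]
  have "\<bar>mu * (\<sigma> + 1)\<bar> = mu * \<bar>\<bar>\<sigma>\<bar> - 1\<bar>" 
  proof -
    have "\<bar>\<bar>\<sigma>\<bar> - 1\<bar> = \<bar>\<sigma> + 1\<bar>" using left(1) by (simp add: abs_minus_commute)
    then show ?thesis using mu_pos by (simp add: abs_mult)
  qed
  with left(2) show ?thesis by blast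
qed


lemma peak_piece_slope_le_1:
  assumes "peak_piece H x n a \<sigma> A"
  shows "\<exists>n' a' \<sigma>' A'. peak_piece H x n' a' \<sigma>' A' \<and> \<bar>\<sigma>'\<bar> \<le> 1"
proof -
  obtain k :: nat where "\<bar>\<sigma>\<bar> \<le> k" using real_arch_simple by blast
  with assms show ?thesis
  proof (induction k arbitrary: n a \<sigma> A)
    case (Suc k)
    show ?case
    proof (cases "\<bar>\<sigma>\<bar> \<le> 1")
      case False
      obtain a' \<sigma>' A' where "peak_piece H x (Suc n) a' \<sigma>' A'" "\<bar>\<sigma>'\<bar> = mu * (\<bar>\<sigma>\<bar> - 1)"
        using peak_piece_step[OF Suc.prems(1)] False by auto
      moreover have "mu * (\<bar>\<sigma>\<bar> - 1) \<le> \<bar>\<sigma>\<bar> - 1"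
        using False mu_pos mu_less_1 by (intro mult_left_le_one_le) auto
      ultimately show ?thesis using Suc.IH Suc.prems(2) by force
    qed (use Suc.prems in blast)
  qed force
qed


definition balanced_slope where "balanced_slope \<sigma> \<longleftrightarrow> mu * (1 - mu) \<le> \<bar>\<sigma>\<bar> \<and> \<bar>\<sigma>\<bar> \<le> mu"

lemma peak_piece_balanced:
  assumes "peak_piece H x n a \<sigma> A"
  shows "\<exists>n' a' \<sigma>' A'. peak_piece H x n' a' \<sigma>' A' \<and> balanced_slope \<sigma>'"
proof -
  have step: "\<exists>a' \<sigma>' A'. peak_piece H x (Suc n) a' \<sigma>' A' \<and> \<bar>\<sigma>'\<bar> = mu * (1 - \<bar>\<sigma>\<bar>)"
    if "peak_piece H x n a \<sigma> A" "\<bar>\<sigma>\<bar> \<le> 1" for n a \<sigma> A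
  proof -
    have "\<bar>\<bar>\<sigma>\<bar> - 1\<bar> = 1 - \<bar>\<sigma>\<bar>" using that(2) by simp
    then show ?thesis using peak_piece_step[OF that(1)] by simp
  qed
  obtain n1 a1 \<sigma>1 A1 where 1: "peak_piece H x n1 a1 \<sigma>1 A1" "\<bar>\<sigma>1\<bar> \<le> 1"
    using peak_piece_slope_le_1[OF assms] by blast
  obtain a2 \<sigma>2 A2 where 2: "peak_piece H x (Suc n1) a2 \<sigma>2 A2" "\<bar>\<sigma>2\<bar> = mu * (1 - \<bar>\<sigma>1\<bar>)"
    using step[OF 1] by blast
  have \<sigma>2: "\<bar>\<sigma>2\<bar> \<le> mu" unfolding 2(2) using 1(2) mu_pos by (simp add: mult_left_le_one_le)
  then have "\<bar>\<sigma>2\<bar> \<le> 1" using mu_less_1 by simp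
  then obtain a3 \<sigma>3 A3 where 3: "peak_piece H x (Suc (Suc n1)) a3 \<sigma>3 A3" "\<bar>\<sigma>3\<bar> = mu * (1 - \<bar>\<sigma>2\<bar>)"
    using step[OF 2(1)] by blast
  have "balanced_slope \<sigma>3"
    unfolding balanced_slope_def 3(2) using \<sigma>2 mu_pos
    by (simp add: mult_left_mono mult_left_le_one_le)
  with 3 show ?thesis by blast
qed

lemma balanced_slope_right:
  assumes "balanced_slope \<sigma>" "0 \<le> \<sigma>"
  shows "balanced_slope (mu * (\<sigma> - 1)) \<and> mu * (\<sigma> - 1) < 0"
proof -
  have \<sigma>: "\<sigma> \<le> mu" using assms by (simp add: balanced_slope_def)
  then have "\<bar>mu * (\<sigma> - 1)\<bar> = mu * (1 - \<sigma>)" using mu_pos mu_less_1 by (simp add: abs_mult)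
  moreover have "mu * (1 - mu) \<le> mu * (1 - \<sigma>)" "mu * (1 - \<sigma>) \<le> mu"
    using \<sigma> assms(2) mu_pos by (simp_all add: mult_left_mono)
  moreover have "mu * (\<sigma> - 1) < 0" using \<sigma> mu_pos mu_less_1 by (simp add: mult_pos_neg)
  ultimately show ?thesis by (simp add: balanced_slope_def)
qed

lemma balanced_slope_left:
  assumes "balanced_slope \<sigma>" "\<sigma> \<le> 0"
  shows "balanced_slope (mu * (\<sigma> + 1)) \<and> 0 < mu * (\<sigma> + 1)"
proof -
  have \<sigma>: "- \<sigma> \<le> mu" using assms by (simp add: balanced_slope_def)
  then have "\<bar>mu * (\<sigma> + 1)\<bar> = mu * (1 + \<sigma>)" using mu_pos mu_less_1 by (simp add: abs_mult)
  moreover have "mu * (1 - mu) \<le> mu * (1 + \<sigma>)" "mu * (1 + \<sigma>) \<le> mu"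
    using \<sigma> assms(2) mu_pos by (simp_all add: mult_left_mono)
  moreover have "0 < mu * (\<sigma> + 1)" using \<sigma> mu_pos mu_less_1 by simp
  ultimately show ?thesis by (simp add: balanced_slope_def add.commute)
qed

definition peak_pos where "peak_pos \<sigma> = (if 0 < \<sigma> then 2/3 else (1/3::real))"

text \<open>For balanced slopes the rescaled peak alternates between 2/3 and 1/3, the orbit of the
  doubling map that the right and left steps follow; since each step doubles the distance to
  that orbit, the distance must be 0.\<close>
lemma peak_piece_balanced_position:
  assumes "peak_piece H x n a \<sigma> A" "balanced_slope \<sigma>"
  shows "2 ^ n * (x - a) = peak_pos \<sigma>"
proof -
  have "\<bar>2 ^ n * (x - a) - peak_pos \<sigma>\<bar> \<le> 1 / 2 ^ k" for k
    using assms
  proof (induction k arbitrary: n a \<sigma> A)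
    case 0
    then show ?case using peak_piece_rescaled_max(1)[OF 0(1)] by (auto simp: peak_pos_def)
  next
    case (Suc k)
    define y where "y = 2 ^ n * (x - a)"
    have \<sigma>: "\<sigma> \<noteq> 0" using Suc.prems(2) mu_one_minus_mu_pos by (auto simp: balanced_slope_def)
    show ?case
    proof (cases "1/2 < y")
      case True
      note right = peak_piece_right[OF Suc.prems(1) True[unfolded y_def]]
      have "2 ^ Suc n * (x - (a + 1 / 2 ^ Suc n)) = 2 * y - 1" by (simp add: y_def algebra_simps)
      moreover have "peak_pos (mu * (\<sigma> - 1)) = 1/3" "peak_pos \<sigma> = 2/3"
        using balanced_slope_right[OF Suc.prems(2) right(1)] right(1) \<sigma> by (auto simp: peak_pos_def)
      ultimately have "\<bar>2 * y - 1 - 1/3\<bar> \<le> 1 / 2 ^ k" "peak_pos \<sigma> = 2/3"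
        using Suc.IH[OF right(2)] balanced_slope_right[OF Suc.prems(2) right(1)] by auto
      then show ?thesis unfolding y_def[symmetric] by (simp add: abs_le_iff)
    next
      case False
      then have "y < 1/2" using peak_position_ne_half[OF Suc.prems(1)] by (simp add: y_def)
      note left = peak_piece_left[OF Suc.prems(1) this[unfolded y_def]]
      have "2 ^ Suc n * (x - a) = 2 * y" by (simp add: y_def)
      moreover have "peak_pos (mu * (\<sigma> + 1)) = 2/3" "peak_pos \<sigma> = 1/3"
        using balanced_slope_left[OF Suc.prems(2) left(1)] left(1) \<sigma> by (auto simp: peak_pos_def)
      ultimately have "\<bar>2 * y - 2/3\<bar> \<le> 1 / 2 ^ k" "peak_pos \<sigma> = 1/3"
        using Suc.IH[OF left(2)] balanced_slope_left[OF Suc.prems(2) left(1)] by auto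
      then show ?thesis unfolding y_def[symmetric] by (simp add: abs_le_iff)
    qed
  qed
  then show ?thesis
    by (rule eq_if_abs_diff_le_dyadic)
qed


lemma tilted_max_at_peak_pos:
  assumes "balanced_slope \<sigma>" "v \<in> {0..1}"
  shows "tilted \<sigma> v \<le> tilted \<sigma> (peak_pos \<sigma>)"
proof -
  obtain y where y: "y \<in> {0..1}" "\<forall>v\<in>{0..1}. tilted \<sigma> v \<le> tilted \<sigma> y"
    using continuous_attains_sup[of "{0..1::real}" "tilted \<sigma>"] continuous_on_tilted by auto
  then have "peak_piece (tilted \<sigma>) y 0 0 \<sigma> 0" by (simp add: peak_piece_def tilted_piece_def)
  then have "y = peak_pos \<sigma>" using peak_piece_balanced_position assms(1) by fastforce
  then show ?thesis using y assms(2) by blast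
qed

lemma balanced_slope_mu: "balanced_slope mu"
  using mu_pos mu_less_1 by (simp add: balanced_slope_def mult_left_le_one_le)

lemma F_le_Fmax:
  assumes "u \<in> {0..1}"
  shows "F u \<le> Fmax"
proof -
  have lower: "F u \<le> Fmax" if "u \<in> {0..1/2}" for u
  proof -
    have "F u = lam * tilted mu (2 * u)"
      using tilted_lower_half[of u 0] that by (simp add: tilted_def)
    also have "\<dots> \<le> lam * tilted mu (2/3)"
      using tilted_max_at_peak_pos[OF balanced_slope_mu, of "2 * u"] that lam_pos mu_pos
      by (simp add: peak_pos_def)
    also have "\<dots> = Fmax" using lam_mu Fmax_eq by (simp add: tilted_def F_two_thirds algebra_simps)
    finally show ?thesis .
  qed
  show ?thesis
  proof (cases "u \<le> 1/2")
    case False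
    then show ?thesis using lower[of "1 - u"] F_one_minus[of u] assms by simp
  qed (use lower assms in simp)
qed

text \<open>The constants come from the region u < 1/2, where |u - 2/3| lies between 1/6 and 1.\<close>
definition c_decay where "c_decay = mu * (1 - mu) / 6"
definition C_decay where "C_decay = 6 * (1 + Fmax)"

lemma c_decay_pos: "0 < c_decay" using mu_one_minus_mu_pos by (simp add: c_decay_def)
lemma C_decay_ge_1: "1 \<le> C_decay" using Fmax_gt by (simp add: C_decay_def)

lemma tilted_decay_lower_half:
  assumes \<sigma>: "mu * (1 - mu) \<le> \<sigma>" "\<sigma> \<le> mu" and u: "0 \<le> u" "u < 1/2"
  shows "c_decay * \<bar>u - 2/3\<bar> powr \<alpha> \<le> tilted \<sigma> (2/3) - tilted \<sigma> u"
    "tilted \<sigma> (2/3) - tilted \<sigma> u \<le> C_decay * \<bar>u - 2/3\<bar> powr \<alpha>"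
proof -
  have \<sigma>0: "0 \<le> \<sigma>" using \<sigma> mu_one_minus_mu_pos by simp
  have Fu: "0 \<le> F u" "F u \<le> Fmax" using F_nonneg F_le_Fmax[of u] u by auto
  have eq: "tilted \<sigma> (2/3) - tilted \<sigma> u = \<sigma> * (2/3 - u) + (Fmax - F u)"
    by (simp add: tilted_def F_two_thirds algebra_simps)
  have d: "1/6 \<le> \<bar>u - 2/3\<bar>" "\<bar>u - 2/3\<bar> \<le> 1" using u by auto
  have "\<bar>u - 2/3\<bar> powr \<alpha> \<le> 1" using d alpha_pos by (intro powr_le1) auto
  then have "c_decay * \<bar>u - 2/3\<bar> powr \<alpha> \<le> mu * (1 - mu) * (1/6)"
    using c_decay_pos by (simp add: c_decay_def mult_left_le)
  also have "\<dots> \<le> \<sigma> * (2/3 - u)" using \<sigma> u \<sigma>0 by (intro mult_mono) auto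
  finally show "c_decay * \<bar>u - 2/3\<bar> powr \<alpha> \<le> tilted \<sigma> (2/3) - tilted \<sigma> u"
    using eq Fu by simp
  have "\<sigma> * (2/3 - u) \<le> 1 * 1" using \<sigma> u \<sigma>0 mu_less_1 by (intro mult_mono) auto
  then have "tilted \<sigma> (2/3) - tilted \<sigma> u \<le> (1 + Fmax) * 1" using eq Fu by simp
  also have "\<dots> \<le> (1 + Fmax) * (6 * \<bar>u - 2/3\<bar> powr \<alpha>)"
  proof (intro mult_left_mono)
    have "\<bar>u - 2/3\<bar> powr 1 \<le> \<bar>u - 2/3\<bar> powr \<alpha>" using d alpha_less_1 by (intro powr_mono') auto
    then show "1 \<le> 6 * \<bar>u - 2/3\<bar> powr \<alpha>" using d by simp
  qed (use Fmax_gt in simp)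
  finally show "tilted \<sigma> (2/3) - tilted \<sigma> u \<le> C_decay * \<bar>u - 2/3\<bar> powr \<alpha>"
    by (simp add: C_decay_def algebra_simps)
qed

text \<open>The new slope mu (1 - sigma) stays in [mu (1 - mu), mu] and the distance to 2/3 doubles, so
  the bounds valid away from 2/3 propagate to all scales.\<close>
lemma tilted_two_thirds_upper_half:
  assumes "1/2 \<le> u" "u \<le> 1"
  shows "tilted \<sigma> (2/3) - tilted \<sigma> u
    = lam * (tilted (mu * (1 - \<sigma>)) (2/3) - tilted (mu * (1 - \<sigma>)) (2 - 2 * u))"
proof -
  define \<tau> where "\<tau> = mu * (1 - \<sigma>)"
  have "mu * (\<sigma> - 1) = - \<tau>" by (simp add: \<tau>_def algebra_simps)
  then have "tilted \<sigma> w = (\<sigma> + 1) / 2 + lam * (tilted \<tau> (2 - 2 * w) - \<tau>)"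
    if "1/2 \<le> w" "w \<le> 1" for w
    using tilted_upper_half[OF that, of \<sigma>] tilted_one_minus[of \<tau> "2 - 2 * w"] by simp
  from this[OF assms] this[of "2/3"] show ?thesis by (simp add: \<tau>_def algebra_simps)
qed

lemma tilted_decay_two_thirds:
  assumes "mu * (1 - mu) \<le> \<sigma>" "\<sigma> \<le> mu" "u \<in> {0..1}"
  shows "c_decay * \<bar>u - 2/3\<bar> powr \<alpha> \<le> tilted \<sigma> (2/3) - tilted \<sigma> u \<and>
    tilted \<sigma> (2/3) - tilted \<sigma> u \<le> C_decay * \<bar>u - 2/3\<bar> powr \<alpha>"
proof (cases "u = 2/3")
  case False
  then obtain k where "(1/2::real) ^ k < \<bar>u - 2/3\<bar>" using real_arch_pow_inv[of "\<bar>u - 2/3\<bar>" "1/2"] by auto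
  then have "1 / 2 ^ k \<le> \<bar>u - 2/3\<bar>" by (simp add: power_one_over)
  with assms show ?thesis
  proof (induction k arbitrary: \<sigma> u)
    case (Suc k)
    show ?case
    proof (cases "u < 1/2")
      case True
      then show ?thesis using tilted_decay_lower_half Suc.prems by auto
    next
      case False
      define \<tau> w where "\<tau> = mu * (1 - \<sigma>)" and "w = 2 - 2 * u"
      have "mu * (1 - mu) \<le> \<tau>" "\<tau> \<le> mu"
        using Suc.prems mu_pos mu_less_1 mu_one_minus_mu_pos by (auto simp: \<tau>_def mult_left_mono mult_left_le_one_le)
      moreover have w: "w \<in> {0..1}" "\<bar>w - 2/3\<bar> = 2 * \<bar>u - 2/3\<bar>"
        using False Suc.prems by (auto simp: w_def abs_if)
      moreover have "1 / 2 ^ k \<le> \<bar>w - 2/3\<bar>" using Suc.prems(4) w(2) by simp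
      ultimately have IH: "c_decay * \<bar>w - 2/3\<bar> powr \<alpha> \<le> tilted \<tau> (2/3) - tilted \<tau> w"
        "tilted \<tau> (2/3) - tilted \<tau> w \<le> C_decay * \<bar>w - 2/3\<bar> powr \<alpha>"
        using Suc.IH by blast+
      have scale: "lam * \<bar>w - 2/3\<bar> powr \<alpha> = \<bar>u - 2/3\<bar> powr \<alpha>"
        using w(2) lam_powr_alpha by (simp add: powr_mult mult.assoc[symmetric])
      have eq: "tilted \<sigma> (2/3) - tilted \<sigma> u = lam * (tilted \<tau> (2/3) - tilted \<tau> w)"
        using tilted_two_thirds_upper_half False Suc.prems(3) by (simp add: \<tau>_def w_def)
      show ?thesis
        unfolding eq scale[symmetric] using IH lam_pos
        by (simp add: mult.left_commute[of lam] mult_left_mono)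
    qed
  qed (auto simp: abs_if split: if_splits)
next
  case True
  then show ?thesis by (simp only: True) simp
qed

lemma tilted_decay_peak_pos:
  assumes "balanced_slope \<sigma>" "v \<in> {0..1}"
  shows "c_decay * \<bar>v - peak_pos \<sigma>\<bar> powr \<alpha> \<le> tilted \<sigma> (peak_pos \<sigma>) - tilted \<sigma> v \<and>
    tilted \<sigma> (peak_pos \<sigma>) - tilted \<sigma> v \<le> C_decay * \<bar>v - peak_pos \<sigma>\<bar> powr \<alpha>"
proof (cases "0 < \<sigma>")
  case True
  then show ?thesis
    using tilted_decay_two_thirds[of \<sigma> v] assms by (simp add: balanced_slope_def peak_pos_def)
next
  case False
  then have "mu * (1 - mu) \<le> - \<sigma>" "- \<sigma> \<le> mu" "1 - v \<in> {0..1}"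
    using assms by (auto simp: balanced_slope_def)
  moreover have "tilted \<sigma> (1/3) - tilted \<sigma> v = tilted (- \<sigma>) (2/3) - tilted (- \<sigma>) (1 - v)"
    using tilted_one_minus[of \<sigma> v] tilted_one_minus[of \<sigma> "1/3"] by simp
  moreover have "\<bar>(1 - v) - 2/3\<bar> = \<bar>v - 1/3\<bar>" by (simp add: abs_if)
  ultimately show ?thesis
    using tilted_decay_two_thirds[of "- \<sigma>" "1 - v"] False by (simp add: peak_pos_def)
qed


lemma tilted_piece_containing:
  assumes "x \<in> {0..1}"
  shows "\<exists>a \<sigma> A. tilted_piece F n a \<sigma> A \<and> 0 \<le> a \<and> a + 1 / 2 ^ n \<le> 1 \<and> x \<in> {a..a + 1 / 2 ^ n}"
proof (induction n)
  case 0
  then show ?case using tilted_piece_F assms by force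
next
  case (Suc n)
  then obtain a \<sigma> A where piece: "tilted_piece F n a \<sigma> A" "0 \<le> a" "a + 1 / 2 ^ n \<le> 1"
    "x \<in> {a..a + 1 / 2 ^ n}" by blast
  have half: "0 \<le> 1 / (2::real) ^ Suc n" "1 / (2::real) ^ Suc n + 1 / 2 ^ Suc n = 1 / 2 ^ n"
    by simp_all
  show ?case
  proof (cases "x \<le> a + 1 / 2 ^ Suc n")
    case True
    then show ?thesis using tilted_piece_left[OF piece(1)] piece half by fastforce
  next
    case False
    then have "a + 1 / 2 ^ Suc n \<le> x" "x \<le> a + 1 / 2 ^ Suc n + 1 / 2 ^ Suc n"
      "0 \<le> a + 1 / 2 ^ Suc n" "a + 1 / 2 ^ Suc n + 1 / 2 ^ Suc n \<le> 1"
      using piece(2,3) piece(4)[simplified] half by linarith+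
    then show ?thesis using tilted_piece_right[OF piece(1)] by (intro exI) auto
  qed
qed

lemma local_max_peak_piece:
  assumes x: "x \<in> {0..1}" and "0 < \<delta>"
    and max: "\<forall>t. 0 \<le> t \<and> t \<le> 1 \<and> \<bar>t - x\<bar> < \<delta> \<longrightarrow> F t \<le> F x"
  shows "\<exists>n a \<sigma> A. peak_piece F x n a \<sigma> A"
proof -
  obtain n where n: "(1/2::real) ^ n < \<delta>" using real_arch_pow_inv[OF \<open>0 < \<delta>\<close>, of "1/2"] by auto
  obtain a \<sigma> A where piece: "tilted_piece F n a \<sigma> A" "0 \<le> a" "a + 1 / 2 ^ n \<le> 1"
      "x \<in> {a..a + 1 / 2 ^ n}"
    using tilted_piece_containing[OF x] by blast
  have "F t \<le> F x" if "t \<in> {a..a + 1 / 2 ^ n}" for t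
  proof -
    have "\<bar>t - x\<bar> \<le> 1 / 2 ^ n" using that piece(4) by auto
    then show ?thesis using max n that piece(2,3) by (auto simp: power_one_over)
  qed
  then show ?thesis using piece unfolding peak_piece_def by blast
qed

lemma peak_piece_decay:
  assumes peak: "peak_piece F x n a \<sigma> A" and \<sigma>: "balanced_slope \<sigma>" and t: "\<bar>t - x\<bar> \<le> 1 / (3 * 2 ^ n)"
  shows "t \<in> {0..1} \<and> c_decay * \<bar>t - x\<bar> powr \<alpha> \<le> F x - F t \<and> F x - F t \<le> C_decay * \<bar>t - x\<bar> powr \<alpha>"
proof -
  have pos: "2 ^ n * (x - a) = peak_pos \<sigma>" using peak_piece_balanced_position[OF peak \<sigma>] .
  from peak have piece: "tilted_piece F n a \<sigma> A" and a: "0 \<le> a" "a + 1 / 2 ^ n \<le> 1"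
    and x: "x \<in> {a..a + 1 / 2 ^ n}"
    unfolding peak_piece_def by auto
  define v where "v = 2 ^ n * (t - a)"
  have v: "v - peak_pos \<sigma> = 2 ^ n * (t - x)" using pos by (simp add: v_def algebra_simps)
  then have "\<bar>v - peak_pos \<sigma>\<bar> = 2 ^ n * \<bar>t - x\<bar>" by (simp add: abs_mult)
  also have "\<dots> \<le> 1/3" using t by (simp add: field_simps)
  finally have "\<bar>v - peak_pos \<sigma>\<bar> \<le> 1/3" .
  moreover have "1/3 \<le> peak_pos \<sigma>" "peak_pos \<sigma> \<le> 2/3" by (simp_all add: peak_pos_def)
  ultimately have v01: "v \<in> {0..1}" unfolding atLeastAtMost_iff by linarith
  then have ta: "t \<in> {a..a + 1 / 2 ^ n}" by (auto simp: v_def field_simps)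
  have eq: "F x - F t = lam ^ n * (tilted \<sigma> (peak_pos \<sigma>) - tilted \<sigma> v)"
    using piece ta x pos unfolding tilted_piece_def v_def by (simp add: algebra_simps)
  have scale: "lam ^ n * \<bar>v - peak_pos \<sigma>\<bar> powr \<alpha> = \<bar>t - x\<bar> powr \<alpha>"
    unfolding v using lam_power_powr_alpha[of n] by (simp add: abs_mult powr_mult mult.assoc[symmetric])
  have "t \<in> {0..1}" using ta a by auto
  then show ?thesis
    unfolding eq scale[symmetric] using tilted_decay_peak_pos[OF \<sigma> v01] lam_pos
    by (simp add: mult.left_commute[of "lam ^ n"] mult_left_mono)
qed

lemma local_max_F_cusp:
  assumes "x \<in> {0..1}" "0 < \<delta>"
    and "\<forall>t. 0 \<le> t \<and> t \<le> 1 \<and> \<bar>t - x\<bar> < \<delta> \<longrightarrow> F t \<le> F x"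
  shows "\<exists>\<delta>'>0. \<forall>t. \<bar>t - x\<bar> \<le> \<delta>' \<longrightarrow> t \<in> {0..1} \<and>
    c_decay * \<bar>t - x\<bar> powr \<alpha> \<le> F x - F t \<and> F x - F t \<le> C_decay * \<bar>t - x\<bar> powr \<alpha>"
proof -
  obtain n a \<sigma> A where "peak_piece F x n a \<sigma> A" "balanced_slope \<sigma>"
    using local_max_peak_piece[OF assms] peak_piece_balanced by blast
  then show ?thesis using peak_piece_decay by (intro exI[of _ "1 / (3 * 2 ^ n)"]) auto
qed

end



lemma Omega_eq_subgraph: "Omega \<alpha> = subgraph (Fw \<alpha>)"
  by (simp add: Omega_def subgraph_def)

theorem mainTheorem5:
  fixes \<alpha> x :: real
  assumes "0 < \<alpha>" "\<alpha> < 1"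
    and "0 \<le> x" "x \<le> 1"
    and "\<exists>\<delta>>0. \<forall>t. 0 \<le> t \<and> t \<le> 1 \<and> \<bar>t - x\<bar> < \<delta> \<longrightarrow> Fw \<alpha> t \<le> Fw \<alpha> x"
  defines "X \<equiv> (x, Fw \<alpha> x)"
    and "f \<equiv> indicator (Omega \<alpha>) :: real \<times> real \<Rightarrow> real"
  shows "Ew (Omega \<alpha>) X = ereal (1 / \<alpha> - 1) \<and> Es (Omega \<alpha>) X = ereal (1 / \<alpha> - 1) \<and>
         Ew (- Omega \<alpha>) X = 0 \<and> Es (- Omega \<alpha>) X = 0 \<and>
         (\<forall>p::real. 1 \<le> p \<longrightarrow> up_exp p f X = ereal (1 / p * (1 / \<alpha> - 1))) \<and>
         uinf_exp f X = 0"
proof -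
  interpret takagi \<alpha> using assms(1,2) by unfold_locales
  obtain \<delta> where "0 < \<delta>" and F_cusp: "\<And>t. \<bar>t - x\<bar> \<le> \<delta> \<Longrightarrow> t \<in> {0..1} \<and>
      c_decay * \<bar>t - x\<bar> powr \<alpha> \<le> F x - F t \<and> F x - F t \<le> C_decay * \<bar>t - x\<bar> powr \<alpha>"
    using local_max_F_cusp assms(3-5) by (metis atLeastAtMost_iff)
  interpret G: cusp F x \<alpha> c_decay C_decay \<delta>
    using continuous_on_F F_nonneg assms(1,2) c_decay_pos C_decay_ge_1 \<open>0 < \<delta>\<close> F_cusp
    by unfold_locales auto
  interpret D: density_exponent "Omega \<alpha>" X "1 / \<alpha> + 1" "min G.c_low (1/4)" G.C_up
      "min 1 (min \<delta> (F x))"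
    unfolding Omega_eq_subgraph X_def by (rule G.subgraph_density_exponent)
  note Omega = Ew_eq_if_two_sided_bounds[OF D.c_pos D.C_pos D.r0_pos D.lower D.upper]
    Es_eq_if_two_sided_bounds[OF D.c_pos D.C_pos D.r0_pos D.lower D.upper]
  have compl_lower: "1/4 * r powr 2 \<le> measure lebesgue (- Omega \<alpha> \<inter> ball X r)"
    and compl_upper: "measure lebesgue (- Omega \<alpha> \<inter> ball X r) \<le> 4 * r powr 2"
    if "0 < r" "r \<le> \<delta>" for r
    using G.compl_subgraph_measure_lower[OF that] measure_Int_ball_le[OF G.compl_subgraph_sets \<open>0 < r\<close>]
    by (simp_all add: X_def Omega_eq_subgraph)
  note compl = Ew_eq_if_two_sided_bounds[of "1/4" 4 \<delta>, OF _ _ \<open>0 < \<delta>\<close> compl_lower compl_upper]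
    Es_eq_if_two_sided_bounds[of "1/4" 4 \<delta>, OF _ _ \<open>0 < \<delta>\<close> compl_lower compl_upper]
  show ?thesis
    using Omega compl D.up_exp_indicator D.uinf_exp_indicator by (simp add: f_def zero_ereal_def)
qed

end
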